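(* Let $s\in\mathbb{N}$ and $a,c\in\mathbb{Z}_p$ with $c\neq 0$. Let $L_7(s,a,c)$ be the $\mathbb{Z}_p$-Lie lattice with basis $x_0,x_1,x_2$ and brackets $[x_1,x_2]=0$, $[x_0,x_1]=p^sax_1+p^scx_2$, $[x_0,x_2]=p^sx_1$. Assume that one of the following holds: (1) $v_p(a)\geqslant 1$ and $v_p(c)\geqslant 2$; (2) $v_p(a)=0$ and $v_p(c)\geqslant 1$; (3) $p\geqslant 3$, $a\neq 0$, $v_p(a)\geqslant 1$ and $v_p(c)=0$; (4) $a=0$, $v_p(c)=0$ and $c$ is not a square modulo $p$; (5) $v_p(a)=0$, $v_p(c)=0$ and $v_p(4c+a^2)\neq 1$. Then $L_7(s,a,c)$ is not self-similar of index $p$.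
   Context: $p$ is any prime, $\mathbb{N}=\{0,1,2,\dots\}$, $v_p$ is the $p$-adic valuation. A virtual endomorphism of a $\mathbb{Z}_p$-Lie lattice $L$ is a homomorphism of algebras $\varphi:M\to L$ with $M\subseteq L$ a finite-index subalgebra, of index $[L:M]$. An ideal $I$ of $L$ is $\varphi$-invariant if it lies in the domain of every power of $\varphi$ and $\varphi(I)\subseteq I$; $\varphi$ is simple if no non-zero ideal is $\varphi$-invariant. $L$ is self-similar of index $p^k$ if it has a simple virtual endomorphism of index $p^k$. *)

theory Defs
  imports Main "HOL-Library.Extended_Nat" "HOL-Computational_Algebra.Primes"
begin

text \<open>An element of \<open>\<int>\<^sub>p\<close> is represented by its coherent sequence of residues:
  \<open>f n\<close> is the residue modulo \<open>p^n\<close> (in \<open>{0..<p^n}\<close>), and \<open>f n = f (n+1) mod p^n\<close>.\<close>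

definition zp :: "nat \<Rightarrow> (nat \<Rightarrow> int) set" where
  "zp p = {f. \<forall>n. 0 \<le> f n \<and> f n < int p ^ n \<and> f n = f (Suc n) mod (int p ^ n)}"

definition zp_zero :: "nat \<Rightarrow> int" where
  "zp_zero = (\<lambda>n. 0)"

definition zp_of_int :: "nat \<Rightarrow> int \<Rightarrow> (nat \<Rightarrow> int)" where
  "zp_of_int p k = (\<lambda>n. k mod (int p ^ n))"

definition zp_add :: "nat \<Rightarrow> (nat \<Rightarrow> int) \<Rightarrow> (nat \<Rightarrow> int) \<Rightarrow> (nat \<Rightarrow> int)" where
  "zp_add p x y = (\<lambda>n. (x n + y n) mod (int p ^ n))"

definition zp_neg :: "nat \<Rightarrow> (nat \<Rightarrow> int) \<Rightarrow> (nat \<Rightarrow> int)" where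
  "zp_neg p x = (\<lambda>n. (- x n) mod (int p ^ n))"

definition zp_sub :: "nat \<Rightarrow> (nat \<Rightarrow> int) \<Rightarrow> (nat \<Rightarrow> int) \<Rightarrow> (nat \<Rightarrow> int)" where
  "zp_sub p x y = (\<lambda>n. (x n - y n) mod (int p ^ n))"

definition zp_mul :: "nat \<Rightarrow> (nat \<Rightarrow> int) \<Rightarrow> (nat \<Rightarrow> int) \<Rightarrow> (nat \<Rightarrow> int)" where
  "zp_mul p x y = (\<lambda>n. (x n * y n) mod (int p ^ n))"

definition zp_val :: "nat \<Rightarrow> (nat \<Rightarrow> int) \<Rightarrow> enat" where
  "zp_val p x = (if x = zp_zero then \<infinity> else enat (LEAST n. x (Suc n) \<noteq> 0))"

record 'a zp_lie =
  lcarrier :: "'a set"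
  lzero :: 'a
  ladd :: "'a \<Rightarrow> 'a \<Rightarrow> 'a"
  lsmul :: "(nat \<Rightarrow> int) \<Rightarrow> 'a \<Rightarrow> 'a"
  lbr :: "'a \<Rightarrow> 'a \<Rightarrow> 'a"

definition lie_subalgebra :: "nat \<Rightarrow> 'a zp_lie \<Rightarrow> 'a set \<Rightarrow> bool" where
  "lie_subalgebra p L M \<longleftrightarrow> M \<subseteq> lcarrier L \<and> lzero L \<in> M \<and>
     (\<forall>x\<in>M. \<forall>y\<in>M. ladd L x y \<in> M \<and> lbr L x y \<in> M) \<and>
     (\<forall>r\<in>zp p. \<forall>x\<in>M. lsmul L r x \<in> M)"

definition lie_ideal :: "nat \<Rightarrow> 'a zp_lie \<Rightarrow> 'a set \<Rightarrow> bool" where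
  "lie_ideal p L I \<longleftrightarrow> I \<subseteq> lcarrier L \<and> lzero L \<in> I \<and>
     (\<forall>x\<in>I. \<forall>y\<in>I. ladd L x y \<in> I) \<and>
     (\<forall>r\<in>zp p. \<forall>x\<in>I. lsmul L r x \<in> I) \<and>
     (\<forall>x\<in>lcarrier L. \<forall>y\<in>I. lbr L x y \<in> I)"

definition lie_cosets :: "'a zp_lie \<Rightarrow> 'a set \<Rightarrow> 'a set set" where
  "lie_cosets L M = {{ladd L x m | m. m \<in> M} | x. x \<in> lcarrier L}"

definition lie_index :: "'a zp_lie \<Rightarrow> 'a set \<Rightarrow> nat" where
  "lie_index L M = card (lie_cosets L M)"

definition virtual_endo :: "nat \<Rightarrow> 'a zp_lie \<Rightarrow> 'a set \<Rightarrow> ('a \<Rightarrow> 'a) \<Rightarrow> bool" where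
  "virtual_endo p L M \<phi> \<longleftrightarrow> lie_subalgebra p L M \<and> finite (lie_cosets L M) \<and>
     (\<forall>x\<in>M. \<phi> x \<in> lcarrier L) \<and>
     (\<forall>x\<in>M. \<forall>y\<in>M. \<phi> (ladd L x y) = ladd L (\<phi> x) (\<phi> y)) \<and>
     (\<forall>r\<in>zp p. \<forall>x\<in>M. \<phi> (lsmul L r x) = lsmul L r (\<phi> x)) \<and>
     (\<forall>x\<in>M. \<forall>y\<in>M. \<phi> (lbr L x y) = lbr L (\<phi> x) (\<phi> y))"

primrec dom_pow :: "'a zp_lie \<Rightarrow> 'a set \<Rightarrow> ('a \<Rightarrow> 'a) \<Rightarrow> nat \<Rightarrow> 'a set" where
  "dom_pow L M \<phi> 0 = lcarrier L"
| "dom_pow L M \<phi> (Suc n) = {x \<in> M. \<phi> x \<in> dom_pow L M \<phi> n}"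

definition invariant_ideal :: "nat \<Rightarrow> 'a zp_lie \<Rightarrow> 'a set \<Rightarrow> ('a \<Rightarrow> 'a) \<Rightarrow> 'a set \<Rightarrow> bool" where
  "invariant_ideal p L M \<phi> I \<longleftrightarrow> lie_ideal p L I \<and> (\<forall>n. I \<subseteq> dom_pow L M \<phi> n) \<and> \<phi> ` I \<subseteq> I"

definition simple_virtual_endo :: "nat \<Rightarrow> 'a zp_lie \<Rightarrow> 'a set \<Rightarrow> ('a \<Rightarrow> 'a) \<Rightarrow> bool" where
  "simple_virtual_endo p L M \<phi> \<longleftrightarrow> virtual_endo p L M \<phi> \<and>
     (\<forall>I. invariant_ideal p L M \<phi> I \<longrightarrow> I = {lzero L})"

definition self_similar_of_index :: "nat \<Rightarrow> 'a zp_lie \<Rightarrow> nat \<Rightarrow> bool" where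
  "self_similar_of_index p L k \<longleftrightarrow>
     (\<exists>M \<phi>. simple_virtual_endo p L M \<phi> \<and> lie_index L M = p ^ k)"

text \<open>Elements \<open>u0 x0 + u1 x1 + u2 x2\<close> are triples \<open>(u0,u1,u2)\<close>.
  Brackets: \<open>[x1,x2]=0\<close>, \<open>[x0,x1] = p^s a x1 + p^s c x2\<close>, \<open>[x0,x2] = p^s x1\<close>, extended bilinearly
  and antisymmetrically.\<close>
definition L7 :: "nat \<Rightarrow> nat \<Rightarrow> (nat \<Rightarrow> int) \<Rightarrow> (nat \<Rightarrow> int)
    \<Rightarrow> ((nat \<Rightarrow> int) \<times> (nat \<Rightarrow> int) \<times> (nat \<Rightarrow> int)) zp_lie" where
  "L7 p s a c =
    \<lparr> lcarrier = zp p \<times> zp p \<times> zp p,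
      lzero = (zp_zero, zp_zero, zp_zero),
      ladd = (\<lambda>(u0,u1,u2) (v0,v1,v2). (zp_add p u0 v0, zp_add p u1 v1, zp_add p u2 v2)),
      lsmul = (\<lambda>r (u0,u1,u2). (zp_mul p r u0, zp_mul p r u1, zp_mul p r u2)),
      lbr = (\<lambda>(u0,u1,u2) (v0,v1,v2).
        (let ps = zp_of_int p (int p ^ s);
             d01 = zp_sub p (zp_mul p u0 v1) (zp_mul p u1 v0);
             d02 = zp_sub p (zp_mul p u0 v2) (zp_mul p u2 v0)
         in (zp_zero,
             zp_add p (zp_mul p (zp_mul p ps a) d01) (zp_mul p ps d02),
             zp_mul p (zp_mul p ps c) d01))) \<rparr>"

end

(* Suppose phi : M -> L is a simple virtual endomorphism of L = L_7(s,a,c) with [L : M] = p.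
   Then p L is contained in M, phi maps p x1 and p x2 into the abelian ideal spanned by x1, x2,
   and its matrix P there satisfies p P B = l B P, where B is the matrix of ad x0 on that ideal
   (up to the factor p^s) and l is the x0-coordinate of phi (p x0).  Since [L : M] = p, the
   matrix P is singular modulo p.  If P is singular, its kernel yields a nonzero invariant ideal.
   Otherwise l = p or l = -p, so either P = y B + w commutes with B, or a = 0 and P anticommutes
   with B.  In each of the cases (1)-(5) one then exhibits a nonzero submodule of p (Zp x1 + Zp x2)
   that is stable under B and under phi: an eigenline of B, lifted by Hensel's lemma, when
   X^2 - a X - c has a simple root mod p; all of p (Zp x1 + Zp x2) when it has no root mod p;
   p Zp x1 + p^2 Zp x2 when p | a and p^2 | c; and {X1 = 0 mod p, 2 X2 + a X1 = 0 mod p^2} when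
   p^2 divides the discriminant a^2 + 4c.  Such a submodule is a nonzero phi-invariant ideal,
   contradicting simplicity. *)

theory Submission
  imports Defs "HOL-Number_Theory.Number_Theory"
begin

section \<open>The p-adic integers\<close>

(* The product of all the rings Z/q^n Z, one type for all moduli q.  For the prime p of
   the theorem (a term, not a type) the p-adic integers sit inside it as the subring Zp,
   so that identities in Zp can be proved by ring automation on this type. *)
typedef resfam = "{f :: nat \<Rightarrow> nat \<Rightarrow> int. \<forall>q n. f q n mod int q ^ n = f q n}"
  morphisms residue Abs_resfam
  by (rule exI[of _ "\<lambda>q n. 0"]) simp

setup_lifting type_definition_resfam

instantiation resfam :: comm_ring_1
begin

lift_definition zero_resfam :: resfam is "\<lambda>q n. 0" by simp
lift_definition one_resfam :: resfam is "\<lambda>q n. 1 mod int q ^ n" by simp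
lift_definition plus_resfam :: "resfam \<Rightarrow> resfam \<Rightarrow> resfam"
  is "\<lambda>f g q n. (f q n + g q n) mod int q ^ n" by simp
lift_definition minus_resfam :: "resfam \<Rightarrow> resfam \<Rightarrow> resfam"
  is "\<lambda>f g q n. (f q n - g q n) mod int q ^ n" by simp
lift_definition uminus_resfam :: "resfam \<Rightarrow> resfam" is "\<lambda>f q n. (- f q n) mod int q ^ n" by simp
lift_definition times_resfam :: "resfam \<Rightarrow> resfam \<Rightarrow> resfam"
  is "\<lambda>f g q n. (f q n * g q n) mod int q ^ n" by simp

instance
proof
  fix a b c :: resfam
  show "a * b * c = a * (b * c)" by transfer (simp add: mod_simps mult.assoc)
  show "a * b = b * a" by transfer (simp add: mult.commute)
  show "1 * a = a" by transfer (simp add: mod_simps)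
  show "a + b + c = a + (b + c)" by transfer (simp add: mod_simps add.assoc)
  show "a + b = b + a" by transfer (simp add: add.commute)
  show "0 + a = a" by transfer simp
  show "- a + a = 0" by transfer (simp add: mod_simps)
  show "a - b = a + - b" by transfer (simp add: mod_simps)
  show "(a + b) * c = a * c + b * c" by transfer (simp add: mod_simps ring_distribs)
  show "(0::resfam) \<noteq> 1"
  proof transfer
    have "(1::int) mod int 2 ^ 1 \<noteq> 0" by simp
    thus "(\<lambda>q n. 0) \<noteq> (\<lambda>q n. 1 mod int q ^ n)" by metis
  qed
qed

end

lemma residue_mod [simp]: "residue X q n mod int q ^ n = residue X q n"
  using residue[of X] by simp

lemma residue_of_int: "residue (of_int k) = (\<lambda>q n. k mod int q ^ n)"
proof (induction k rule: int_induct[where k = 0])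
  case base thus ?case by (simp add: zero_resfam.rep_eq)
next
  case (step1 i) thus ?case by (simp add: plus_resfam.rep_eq one_resfam.rep_eq mod_simps)
next
  case (step2 i) thus ?case by (simp add: minus_resfam.rep_eq one_resfam.rep_eq mod_simps)
qed

lemma residue_of_nat: "residue (of_nat k) = (\<lambda>q n. int k mod int q ^ n)"
  using residue_of_int[of "int k"] by simp

lemma residue_numeral: "residue (numeral k) = (\<lambda>q n. numeral k mod int q ^ n)"
  using residue_of_int[of "numeral k"] by simp

lemma residue_power: "residue (X ^ k) q n = residue X q n ^ k mod int q ^ n"
  by (induction k) (simp_all add: one_resfam.rep_eq times_resfam.rep_eq mod_simps)

lemmas residue_simps = plus_resfam.rep_eq minus_resfam.rep_eq uminus_resfam.rep_eq
  times_resfam.rep_eq zero_resfam.rep_eq one_resfam.rep_eq residue_of_int residue_of_nat residue_power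

lemma zp_bounds: "x \<in> zp p \<Longrightarrow> 0 \<le> x n \<and> x n < int p ^ n"
  unfolding zp_def by blast

lemma zp_mod: "x \<in> zp p \<Longrightarrow> x n mod int p ^ n = x n"
  using zp_bounds[of x p n] by simp

lemma zp_restrict:
  assumes "x \<in> zp p" "k \<le> m"
  shows "x k = x m mod int p ^ k"
  using assms(2)
proof (induction m)
  case 0 thus ?case using zp_mod[OF assms(1), of 0] by simp
next
  case (Suc m)
  show ?case
  proof (cases "k = Suc m")
    case True thus ?thesis using zp_mod[OF assms(1), of k] by (simp del: power_Suc)
  next
    case False
    hence "k \<le> m" using Suc by simp
    hence "x k = x m mod int p ^ k" using Suc by simp
    also have "x m = x (Suc m) mod int p ^ m" using assms(1) unfolding zp_def by blast
    also have "x (Suc m) mod int p ^ m mod int p ^ k = x (Suc m) mod int p ^ k"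
      by (rule mod_mod_cancel) (simp add: \<open>k \<le> m\<close> le_imp_power_dvd)
    finally show ?thesis .
  qed
qed

lemma zp_cong: "x \<in> zp p \<Longrightarrow> k \<le> n \<Longrightarrow> [x n = x k] (mod int p ^ k)"
  using zp_restrict[of x p k n] by (simp add: cong_def)

lemma zp_intro:
  assumes "p > 0" "\<And>n. [g n = g (Suc n)] (mod int p ^ n)"
  shows "(\<lambda>n. g n mod int p ^ n) \<in> zp p"
  unfolding zp_def
proof (intro CollectI allI conjI)
  fix n
  show "0 \<le> g n mod int p ^ n" "g n mod int p ^ n < int p ^ n" using assms(1) by simp_all
  have "g (Suc n) mod int p ^ Suc n mod int p ^ n = g (Suc n) mod int p ^ n"
    by (rule mod_mod_cancel) (simp add: le_imp_power_dvd)
  also have "\<dots> = g n mod int p ^ n" using assms(2)[of n] by (simp add: cong_def)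
  finally show "g n mod int p ^ n = g (Suc n) mod int p ^ Suc n mod int p ^ n" by simp
qed

lemma zp_cong_Suc: "x \<in> zp p \<Longrightarrow> [x n = x (Suc n)] (mod int p ^ n)"
  using zp_cong[of x p n "Suc n"] by (simp add: cong_sym)

lemma zp_zero_mem: "p > 0 \<Longrightarrow> zp_zero \<in> zp p"
  by (simp add: zp_def zp_zero_def)

lemma zp_add_mem: "p > 0 \<Longrightarrow> x \<in> zp p \<Longrightarrow> y \<in> zp p \<Longrightarrow> zp_add p x y \<in> zp p"
  unfolding zp_add_def by (rule zp_intro) (auto intro: cong_add zp_cong_Suc)

lemma zp_sub_mem: "p > 0 \<Longrightarrow> x \<in> zp p \<Longrightarrow> y \<in> zp p \<Longrightarrow> zp_sub p x y \<in> zp p"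
  unfolding zp_sub_def by (rule zp_intro) (auto intro: cong_diff zp_cong_Suc)

lemma zp_mul_mem: "p > 0 \<Longrightarrow> x \<in> zp p \<Longrightarrow> y \<in> zp p \<Longrightarrow> zp_mul p x y \<in> zp p"
  unfolding zp_mul_def by (rule zp_intro) (auto intro: cong_mult zp_cong_Suc)

lemma zp_of_int_mem: "p > 0 \<Longrightarrow> zp_of_int p k \<in> zp p"
  unfolding zp_of_int_def by (rule zp_intro) auto

lift_definition of_zp :: "nat \<Rightarrow> (nat \<Rightarrow> int) \<Rightarrow> resfam" is
  "\<lambda>p x q n. if q = p then x n mod int p ^ n else 0" by simp

(* The unit of the subring Zp; it is not the unit 1 of resfam. *)
definition one_Zp :: "nat \<Rightarrow> resfam" where
  "one_Zp p = of_zp p (\<lambda>n. 1)"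

lemma of_zp_add: "of_zp p (zp_add p x y) = of_zp p x + of_zp p y"
  unfolding zp_add_def by transfer (auto simp: mod_simps fun_eq_iff)

lemma of_zp_sub: "of_zp p (zp_sub p x y) = of_zp p x - of_zp p y"
  unfolding zp_sub_def by transfer (auto simp: mod_simps fun_eq_iff)

lemma of_zp_mul: "of_zp p (zp_mul p x y) = of_zp p x * of_zp p y"
  unfolding zp_mul_def by transfer (auto simp: mod_simps fun_eq_iff)

lemma of_zp_zero: "of_zp p zp_zero = 0"
  unfolding zp_zero_def by transfer (auto simp: fun_eq_iff)

lemma of_zp_of_int: "of_zp p (zp_of_int p k) = of_int k * one_Zp p"
  unfolding zp_of_int_def one_Zp_def
  by (auto simp: fun_eq_iff times_resfam.rep_eq of_zp.rep_eq residue_of_int mod_simps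
      intro!: residue_inject[THEN iffD1])

lemma one_Zp_mult: "one_Zp p * of_zp p x = of_zp p x"
  unfolding one_Zp_def by transfer (auto simp: fun_eq_iff mod_simps)

lemma residue_of_zp [simp]: "x \<in> zp p \<Longrightarrow> residue (of_zp p x) p = x"
  by (simp add: fun_eq_iff of_zp.rep_eq zp_mod)

lemma of_zp_inject: "x \<in> zp p \<Longrightarrow> y \<in> zp p \<Longrightarrow> of_zp p x = of_zp p y \<longleftrightarrow> x = y"
  by (metis residue_of_zp)

lemma zp_eq_zero_iff: "x \<in> zp p \<Longrightarrow> p > 0 \<Longrightarrow> x = zp_zero \<longleftrightarrow> of_zp p x = 0"
  using of_zp_inject[OF _ zp_zero_mem, of x p] of_zp_zero[of p] by simp

locale padic =
  fixes p :: nat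
  assumes prime_p: "prime p"
begin

lemma p_gt_1: "p > 1" using prime_p prime_gt_1_nat by blast
lemma p_pos: "p > 0" using p_gt_1 by simp
lemma prime_int_p: "prime (int p)" using prime_p by simp

definition Zp :: "resfam set" where
  "Zp = of_zp p ` zp p"

lemma of_zp_in_Zp: "x \<in> zp p \<Longrightarrow> of_zp p x \<in> Zp"
  unfolding Zp_def by blast

lemma residue_in_zp: "X \<in> Zp \<Longrightarrow> residue X p \<in> zp p"
  unfolding Zp_def by (auto simp: residue_of_zp)

lemma of_zp_residue: "X \<in> Zp \<Longrightarrow> of_zp p (residue X p) = X"
  unfolding Zp_def by auto

lemma Zp_add: "X \<in> Zp \<Longrightarrow> Y \<in> Zp \<Longrightarrow> X + Y \<in> Zp"
  unfolding Zp_def by (auto simp: of_zp_add[symmetric] intro!: imageI zp_add_mem[OF p_pos])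

lemma Zp_diff: "X \<in> Zp \<Longrightarrow> Y \<in> Zp \<Longrightarrow> X - Y \<in> Zp"
  unfolding Zp_def by (auto simp: of_zp_sub[symmetric] intro!: imageI zp_sub_mem[OF p_pos])

lemma Zp_mult: "X \<in> Zp \<Longrightarrow> Y \<in> Zp \<Longrightarrow> X * Y \<in> Zp"
  unfolding Zp_def by (auto simp: of_zp_mul[symmetric] intro!: imageI zp_mul_mem[OF p_pos])

lemma Zp_zero: "0 \<in> Zp"
  unfolding Zp_def using zp_zero_mem[OF p_pos] by (metis of_zp_zero imageI)

lemma Zp_uminus: "X \<in> Zp \<Longrightarrow> - X \<in> Zp"
  using Zp_diff[OF Zp_zero] by fastforce

lemma Zp_one: "one_Zp p \<in> Zp"
  using of_zp_in_Zp[OF zp_of_int_mem[OF p_pos, of 1]] of_zp_of_int[of p 1] by simp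

lemma one_Zp_left: "X \<in> Zp \<Longrightarrow> one_Zp p * X = X"
  unfolding Zp_def using one_Zp_mult by blast

lemma one_Zp_right: "X \<in> Zp \<Longrightarrow> X * one_Zp p = X"
  using one_Zp_left by (simp add: mult.commute)

lemma Zp_of_int_mult: "X \<in> Zp \<Longrightarrow> of_int k * X \<in> Zp"
proof -
  assume X: "X \<in> Zp"
  have "of_int k * X = of_zp p (zp_of_int p k) * X"
    using one_Zp_left[OF X] by (simp add: of_zp_of_int mult.assoc)
  thus ?thesis using Zp_mult[OF of_zp_in_Zp[OF zp_of_int_mem[OF p_pos]] X] by simp
qed

lemma Zp_of_nat_mult: "X \<in> Zp \<Longrightarrow> of_nat k * X \<in> Zp"
  using Zp_of_int_mult[of X "int k"] by simp

lemma Zp_numeral_mult: "X \<in> Zp \<Longrightarrow> numeral k * X \<in> Zp"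
  using Zp_of_int_mult[of X "numeral k"] by simp

lemmas Zp_closed = Zp_add Zp_diff Zp_mult Zp_uminus Zp_zero Zp_one
  Zp_of_int_mult Zp_of_nat_mult Zp_numeral_mult of_zp_in_Zp

lemma of_int_one_Zp_nonzero:
  assumes "k \<noteq> 0"
  shows "of_int k * one_Zp p \<noteq> 0"
proof
  obtain n where n: "\<bar>k\<bar> < int p ^ n"
  proof
    have "nat \<bar>k\<bar> < 2 ^ nat \<bar>k\<bar>" by (rule less_exp)
    also have "(2::nat) ^ nat \<bar>k\<bar> \<le> p ^ nat \<bar>k\<bar>" using p_gt_1 by (simp add: power_mono)
    finally have "int (nat \<bar>k\<bar>) < int (p ^ nat \<bar>k\<bar>)" by (simp only: of_nat_less_iff)
    thus "\<bar>k\<bar> < int p ^ nat \<bar>k\<bar>" by simp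
  qed
  assume "of_int k * one_Zp p = 0"
  hence "residue (of_int k * one_Zp p) p n = 0" by (simp add: zero_resfam.rep_eq)
  hence "int p ^ n dvd k"
    by (simp add: times_resfam.rep_eq residue_of_int one_Zp_def of_zp.rep_eq mod_simps
        dvd_eq_mod_eq_0)
  hence "\<bar>int p ^ n\<bar> \<le> \<bar>k\<bar>" using assms by (rule dvd_imp_le_int[rotated])
  thus False using n by simp
qed

lemma zp_valuation_witness:
  assumes "x \<in> zp p" "x \<noteq> zp_zero"
  obtains i where "\<And>m. Suc i \<le> m \<Longrightarrow> \<exists>u. x m = int p ^ i * u \<and> \<not> int p dvd u"
proof -
  have ex: "\<exists>n. x n \<noteq> 0" using assms(2) unfolding zp_zero_def by auto
  define n0 where "n0 = (LEAST n. x n \<noteq> 0)"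
  have n0: "x n0 \<noteq> 0" unfolding n0_def using ex by (rule LeastI_ex)
  have "x 0 = 0" using zp_bounds[OF assms(1), of 0] by simp
  then obtain i where i: "n0 = Suc i" using n0 by (cases n0) auto
  have xi: "x i = 0" using not_less_Least[of i "\<lambda>n. x n \<noteq> 0"] i unfolding n0_def by auto
  show thesis
  proof (rule that)
    fix m assume m: "Suc i \<le> m"
    have "x m mod int p ^ i = 0" using zp_restrict[OF assms(1), of i m] xi m by simp
    then obtain u where u: "x m = int p ^ i * u" by auto
    have "x m mod int p ^ Suc i \<noteq> 0" using zp_restrict[OF assms(1) m] n0 i by simp
    hence "\<not> int p ^ Suc i dvd x m" by auto
    thus "\<exists>u. x m = int p ^ i * u \<and> \<not> int p dvd u" using u by auto
  qed
qed

lemma zp_no_zero_divisors: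
  assumes "x \<in> zp p" "y \<in> zp p" "zp_mul p x y = zp_zero"
  shows "x = zp_zero \<or> y = zp_zero"
proof (rule ccontr)
  assume "\<not> ?thesis"
  then obtain i j where
    i: "\<And>m. Suc i \<le> m \<Longrightarrow> \<exists>u. x m = int p ^ i * u \<and> \<not> int p dvd u" and
    j: "\<And>m. Suc j \<le> m \<Longrightarrow> \<exists>u. y m = int p ^ j * u \<and> \<not> int p dvd u"
    using zp_valuation_witness assms(1,2) by metis
  define m where "m = Suc (i + j)"
  obtain u v where u: "x m = int p ^ i * u" "\<not> int p dvd u" and v: "y m = int p ^ j * v" "\<not> int p dvd v"
    using i[of m] j[of m] unfolding m_def by auto
  have "(x m * y m) mod int p ^ m = 0"
    using fun_cong[OF assms(3), of m] by (simp add: zp_mul_def zp_zero_def)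
  hence "int p ^ (i + j) * int p dvd int p ^ (i + j) * (u * v)"
    using u v by (auto simp: m_def power_add ac_simps)
  hence "int p dvd u * v" using p_pos by (subst (asm) dvd_mult_cancel_left) simp
  thus False using u v prime_int_p prime_dvd_mult_iff by blast
qed

lemma Zp_no_zero_divisors:
  assumes "X \<in> Zp" "Y \<in> Zp" "X * Y = 0"
  shows "X = 0 \<or> Y = 0"
proof -
  obtain x y where xy: "x \<in> zp p" "y \<in> zp p" "X = of_zp p x" "Y = of_zp p y"
    using assms(1,2) unfolding Zp_def by blast
  have "of_zp p (zp_mul p x y) = 0" using assms(3) by (simp add: xy of_zp_mul)
  hence "zp_mul p x y = zp_zero" using zp_eq_zero_iff[OF zp_mul_mem[OF p_pos xy(1,2)] p_pos] by simp
  thus ?thesis using zp_no_zero_divisors[OF xy(1,2)] zp_eq_zero_iff[OF _ p_pos] xy by blast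
qed

lemma Zp_mult_left_cancel:
  assumes "X \<in> Zp" "Y \<in> Zp" "Z \<in> Zp" "Z \<noteq> 0" "Z * X = Z * Y"
  shows "X = Y"
proof -
  have "Z * (X - Y) = 0" using assms(5) by (simp add: algebra_simps)
  thus ?thesis using Zp_no_zero_divisors[OF assms(3) Zp_diff[OF assms(1,2)]] assms(4) by simp
qed

lemma Zp_of_int_mult_cancel:
  assumes "X \<in> Zp" "Y \<in> Zp" "k \<noteq> 0" "of_int k * X = of_int k * Y"
  shows "X = Y"
proof -
  have "(of_int k * one_Zp p) * X = (of_int k * one_Zp p) * Y"
    using assms(4) one_Zp_left[OF assms(1)] one_Zp_left[OF assms(2)] by (metis mult.assoc)
  thus ?thesis
    using Zp_mult_left_cancel[OF assms(1,2) Zp_of_int_mult[OF Zp_one] of_int_one_Zp_nonzero[OF assms(3)]]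
    by blast
qed

lemma Zp_of_nat_mult_cancel: "X \<in> Zp \<Longrightarrow> Y \<in> Zp \<Longrightarrow> k \<noteq> 0 \<Longrightarrow> of_nat k * X = of_nat k * Y \<Longrightarrow> X = Y"
  using Zp_of_int_mult_cancel[of X Y "int k"] by simp

lemma Zp_p_mult_cancel: "X \<in> Zp \<Longrightarrow> Y \<in> Zp \<Longrightarrow> of_nat p * X = of_nat p * Y \<Longrightarrow> X = Y"
  using Zp_of_nat_mult_cancel p_pos by blast

lemma Zp_p_mult_nonzero: "X \<in> Zp \<Longrightarrow> X \<noteq> 0 \<Longrightarrow> of_nat p * X \<noteq> 0"
  using Zp_p_mult_cancel[OF _ Zp_zero] by fastforce

lemma Zp_two_mult_eq_zero: "X \<in> Zp \<Longrightarrow> 2 * X = 0 \<Longrightarrow> X = 0"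
  using Zp_of_int_mult_cancel[OF _ Zp_zero, of X 2] by simp

lemma one_Zp_nonzero: "one_Zp p \<noteq> 0"
  using of_int_one_Zp_nonzero[of 1] by simp

lemma p_one_in_Zp: "of_nat p * one_Zp p \<in> Zp"
  by (intro Zp_closed)

lemma p_one_nonzero: "of_nat p * one_Zp p \<noteq> 0"
  using of_int_one_Zp_nonzero[of "int p"] p_pos by simp

definition pdvd :: "nat \<Rightarrow> resfam \<Rightarrow> bool" where
  "pdvd k X \<longleftrightarrow> residue X p k = 0"

lemma pdvd_add: "pdvd k X \<Longrightarrow> pdvd k Y \<Longrightarrow> pdvd k (X + Y)"
  unfolding pdvd_def by (simp add: residue_simps)

lemma pdvd_diff: "pdvd k X \<Longrightarrow> pdvd k Y \<Longrightarrow> pdvd k (X - Y)"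
  unfolding pdvd_def by (simp add: residue_simps)

lemma pdvd_uminus: "pdvd k X \<Longrightarrow> pdvd k (- X)"
  unfolding pdvd_def by (simp add: residue_simps)

lemma pdvd_mult_left: "pdvd k X \<Longrightarrow> pdvd k (Y * X)"
  unfolding pdvd_def by (simp add: residue_simps)

lemma pdvd_mult_right: "pdvd k X \<Longrightarrow> pdvd k (X * Y)"
  unfolding pdvd_def by (simp add: residue_simps)

lemma pdvd_zero: "pdvd k 0"
  unfolding pdvd_def by (simp add: residue_simps)

lemma pdvd_p_power_mult: "pdvd k (of_nat p ^ k * X)"
  unfolding pdvd_def by (simp add: residue_simps mod_simps)

lemma pdvd_p_mult: "pdvd 1 (of_nat p * X)"
  using pdvd_p_power_mult[of 1 X] by simp

lemma pdvd_of_zp: "x \<in> zp p \<Longrightarrow> pdvd k (of_zp p x) \<longleftrightarrow> x k = 0"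
  unfolding pdvd_def by simp

lemma pdvd_iff_dvd_residue: "X \<in> Zp \<Longrightarrow> k \<le> m \<Longrightarrow> pdvd k X \<longleftrightarrow> int p ^ k dvd residue X p m"
  unfolding pdvd_def using zp_restrict[OF residue_in_zp, of X k m] by (simp add: dvd_eq_mod_eq_0)

lemma pdvd_1_iff: "X \<in> Zp \<Longrightarrow> pdvd 1 X \<longleftrightarrow> int p dvd residue X p 1"
  using pdvd_iff_dvd_residue[of X 1 1] by simp

lemma pdvd_mono:
  assumes "X \<in> Zp" "pdvd k X" "j \<le> k"
  shows "pdvd j X"
proof -
  have "int p ^ j dvd int p ^ k" using assms(3) by (rule le_imp_power_dvd)
  also have "int p ^ k dvd residue X p k" using pdvd_iff_dvd_residue[OF assms(1), of k k] assms(2) by simp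
  finally show ?thesis using pdvd_iff_dvd_residue[OF assms(1,3)] by simp
qed

lemma pdvd_2_1: "X \<in> Zp \<Longrightarrow> pdvd 2 X \<Longrightarrow> pdvd 1 X"
  using pdvd_mono[of X 2 1] by simp

lemma pdvd_mult:
  assumes "X \<in> Zp" "Y \<in> Zp" "pdvd i X" "pdvd j Y"
  shows "pdvd (i + j) (X * Y)"
proof -
  have "int p ^ i dvd residue X p (i + j)" "int p ^ j dvd residue Y p (i + j)"
    using pdvd_iff_dvd_residue[OF assms(1), of i "i + j"] pdvd_iff_dvd_residue[OF assms(2), of j "i + j"]
      assms(3,4) by simp_all
  hence "int p ^ (i + j) dvd residue X p (i + j) * residue Y p (i + j)"
    by (simp add: power_add mult_dvd_mono)
  thus ?thesis unfolding pdvd_def by (simp add: residue_simps dvd_eq_mod_eq_0)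
qed

lemma pdvd_1_1_mult: "X \<in> Zp \<Longrightarrow> Y \<in> Zp \<Longrightarrow> pdvd 1 X \<Longrightarrow> pdvd 1 Y \<Longrightarrow> pdvd 2 (X * Y)"
  using pdvd_mult[of X Y 1 1] unfolding one_add_one by blast

lemma pdvd_1_mult_iff:
  assumes "X \<in> Zp" "Y \<in> Zp"
  shows "pdvd 1 (X * Y) \<longleftrightarrow> pdvd 1 X \<or> pdvd 1 Y"
proof -
  have "pdvd 1 (X * Y) \<longleftrightarrow> int p dvd residue X p 1 * residue Y p 1"
    unfolding pdvd_def by (simp add: residue_simps dvd_eq_mod_eq_0)
  thus ?thesis using pdvd_1_iff[OF assms(1)] pdvd_1_iff[OF assms(2)] prime_dvd_mult_iff[OF prime_int_p]
    by blast
qed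

lemma pdvd_coprime_cancel:
  assumes "X \<in> Zp" "coprime m (int p)" "pdvd k (of_int m * X)"
  shows "pdvd k X"
proof -
  have "int p ^ k dvd m * residue X p k"
    using assms(3) unfolding pdvd_def by (simp add: residue_simps dvd_eq_mod_eq_0 mod_simps)
  moreover have "coprime (int p ^ k) m" using assms(2) by (simp add: ac_simps)
  ultimately have "int p ^ k dvd residue X p k" using coprime_dvd_mult_right_iff by blast
  thus ?thesis unfolding pdvd_def using residue_mod[of X p k] by (simp add: dvd_eq_mod_eq_0)
qed

lemma pdvd_2_mult_cancel:
  assumes "X \<in> Zp" "p \<noteq> 2" "pdvd k (2 * X)"
  shows "pdvd k X"
proof -
  have "odd p" using prime_odd_nat[OF prime_p] p_gt_1 assms(2) by simp
  hence "coprime (2::int) (int p)" using prime_imp_coprime[of "2::int" "int p"] by simp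
  moreover have "pdvd k (of_int 2 * X)" using assms(3) by simp
  ultimately show ?thesis using pdvd_coprime_cancel[OF assms(1)] by blast
qed

lemma pdvd_add_left_iff: "pdvd k X \<Longrightarrow> pdvd k (X + Y) \<longleftrightarrow> pdvd k Y"
  using pdvd_add[of k X Y] pdvd_diff[of k "X + Y" X] by auto

lemma pdvd_1_four_mult_iff:
  assumes "C \<in> Zp" "p \<noteq> 2"
  shows "pdvd 1 (4 * C) \<longleftrightarrow> pdvd 1 C"
proof
  assume "pdvd 1 (4 * C)"
  moreover have "4 * C = 2 * (2 * C)" by simp
  ultimately have "pdvd 1 (2 * C)" using pdvd_2_mult_cancel[OF Zp_numeral_mult[OF assms(1)] assms(2)] by metis
  thus "pdvd 1 C" using pdvd_2_mult_cancel[OF assms] by blast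
qed (rule pdvd_mult_left)

lemma pdvd_Suc_p_mult_cancel:
  assumes "V \<in> Zp" "pdvd (Suc k) (of_nat p * V)"
  shows "pdvd k V"
proof -
  have "(int p * residue V p (Suc k)) mod int p ^ Suc k = 0"
    using assms(2) unfolding pdvd_def by (simp add: residue_simps mod_simps)
  hence "int p * int p ^ k dvd int p * residue V p (Suc k)" by (simp add: dvd_eq_mod_eq_0)
  hence "int p ^ k dvd residue V p (Suc k)" using p_pos by simp
  thus ?thesis using pdvd_iff_dvd_residue[OF assms(1), of k "Suc k"] by simp
qed

lemma pdvd_2_p_mult_cancel: "V \<in> Zp \<Longrightarrow> pdvd 2 (of_nat p * V) \<Longrightarrow> pdvd 1 V"
  using pdvd_Suc_p_mult_cancel[of V 1] by (simp add: numeral_2_eq_2)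

lemma pdvd_1_of_int_iff: "pdvd 1 (of_int d * one_Zp p) \<longleftrightarrow> int p dvd d"
  by (simp add: pdvd_def residue_simps one_Zp_def of_zp.rep_eq mod_simps dvd_eq_mod_eq_0)

lemma p_dvd_small_int: "int p dvd d \<Longrightarrow> \<bar>d\<bar> < int p \<Longrightarrow> d = 0"
  using dvd_imp_le_int[of d "int p"] by fastforce

lemma zp_divide_p_power:
  assumes "x \<in> zp p" "x k = 0"
  obtains y where "y \<in> zp p" "\<And>n. x n = (int p ^ k * y n) mod int p ^ n"
proof
  define y where "y n = x (n + k) div int p ^ k" for n
  have pk: "int p ^ k > 0" using p_pos by simp
  have xy: "x (n + k) = int p ^ k * y n" for n
    using zp_restrict[OF assms(1), of k "n + k"] assms(2) unfolding y_def by (simp add: dvd_eq_mod_eq_0)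
  show "y \<in> zp p" unfolding zp_def
  proof (intro CollectI allI conjI)
    fix n
    have b: "0 \<le> x (n + k)" "x (n + k) < int p ^ (n + k)" using zp_bounds[OF assms(1)] by auto
    show "0 \<le> y n" using b(1) xy[of n] pk by (simp add: zero_le_mult_iff)
    show "y n < int p ^ n" using b(2) xy[of n] p_pos by (simp add: power_add ac_simps)
    have "int p ^ k * y n = x (Suc n + k) mod (int p ^ k * int p ^ n)"
      using zp_restrict[OF assms(1), of "n + k" "Suc n + k"] xy[of n] by (simp add: power_add mult.commute)
    also have "\<dots> = int p ^ k * (y (Suc n) mod int p ^ n)"
      unfolding xy[of "Suc n"] by (rule mod_mult_mult1)
    finally show "y n = y (Suc n) mod int p ^ n" using p_pos by simp
  qed
  show "x n = (int p ^ k * y n) mod int p ^ n" for n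
    using zp_restrict[OF assms(1), of n "n + k"] xy[of n] by simp
qed

lemma pdvd_iff_p_power_mult: "X \<in> Zp \<Longrightarrow> pdvd k X \<longleftrightarrow> (\<exists>Y\<in>Zp. X = of_nat p ^ k * Y)"
proof
  assume X: "X \<in> Zp" and "pdvd k X"
  then obtain y where y: "y \<in> zp p" "\<And>n. residue X p n = (int p ^ k * y n) mod int p ^ n"
    using zp_divide_p_power[OF residue_in_zp] unfolding pdvd_def by blast
  have "X = of_nat p ^ k * of_zp p y"
    using X y(2) unfolding Zp_def
    by (auto simp: fun_eq_iff residue_simps of_zp.rep_eq mod_simps intro!: residue_inject[THEN iffD1])
  thus "\<exists>Y\<in>Zp. X = of_nat p ^ k * Y" using of_zp_in_Zp[OF y(1)] by blast
qed (auto intro: pdvd_p_power_mult)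

lemma pdvd_1_iff_p_mult: "X \<in> Zp \<Longrightarrow> pdvd 1 X \<longleftrightarrow> (\<exists>Y\<in>Zp. X = of_nat p * Y)"
  using pdvd_iff_p_power_mult[of X 1] by simp

lemma zp_unit:
  assumes "x \<in> zp p" "x 1 \<noteq> 0"
  obtains y where "y \<in> zp p" "zp_mul p x y = zp_of_int p 1"
proof
  have coprime: "coprime (x n) (int p ^ n)" for n
  proof (cases "n = 0")
    case False
    have "0 < x 1" "x 1 < int p" using assms(2) zp_bounds[OF assms(1), of 1] by auto
    hence "\<not> int p dvd x 1" by (auto dest: zdvd_imp_le)
    hence "\<not> int p dvd x n" using zp_cong[OF assms(1), of 1 n] False cong_dvd_iff by auto
    hence "coprime (int p) (x n)" using prime_int_p prime_imp_coprime by blast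
    thus ?thesis by (simp add: ac_simps)
  qed simp
  define z where "z n = (SOME z. [x n * z = 1] (mod int p ^ n))" for n
  have z: "[x n * z n = 1] (mod int p ^ n)" for n
    using someI_ex[OF cong_solve_coprime_int[OF coprime[of n]]] by (simp add: z_def)
  have "[z n = z (Suc n)] (mod int p ^ n)" for n
  proof -
    have "[x n * z (Suc n) = x (Suc n) * z (Suc n)] (mod int p ^ n)"
      using zp_cong_Suc[OF assms(1), of n] by (rule cong_scalar_right)
    also have "[x (Suc n) * z (Suc n) = 1] (mod int p ^ n)"
      using z[of "Suc n"] by (rule cong_dvd_modulus) (simp add: le_imp_power_dvd)
    finally have "[x n * z n = x n * z (Suc n)] (mod int p ^ n)"
      using z[of n] by (metis cong_sym cong_trans)
    thus ?thesis using cong_mult_lcancel[OF coprime[of n]] by blast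
  qed
  thus "(\<lambda>n. z n mod int p ^ n) \<in> zp p" by (intro zp_intro p_pos)
  show "zp_mul p x (\<lambda>n. z n mod int p ^ n) = zp_of_int p 1"
    using z by (simp add: fun_eq_iff zp_mul_def zp_of_int_def mod_simps cong_def)
qed

lemma Zp_unit:
  assumes "X \<in> Zp" "\<not> pdvd 1 X"
  obtains Y where "Y \<in> Zp" "X * Y = one_Zp p"
proof -
  obtain x where x: "x \<in> zp p" "X = of_zp p x" using assms(1) unfolding Zp_def by blast
  obtain y where y: "y \<in> zp p" "zp_mul p x y = zp_of_int p 1"
    using zp_unit x assms(2) pdvd_of_zp by metis
  have "X * of_zp p y = one_Zp p"
    using arg_cong[OF y(2), of "of_zp p"] by (simp add: x of_zp_mul of_zp_of_int)
  thus thesis using that of_zp_in_Zp[OF y(1)] by blast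
qed

end

lemma quadratic_lift_step:
  fixes q z A C :: int
  assumes n: "1 \<le> n" and root: "q ^ n dvd z\<^sup>2 - A * z - C" and simple: "coprime (2 * z - A) q"
  shows "\<exists>t. q ^ Suc n dvd (z + q ^ n * t)\<^sup>2 - A * (z + q ^ n * t) - C"
proof -
  obtain k where k: "z\<^sup>2 - A * z - C = q ^ n * k" using root by blast
  obtain d where d: "[(2 * z - A) * d = 1] (mod q)" using cong_solve_coprime_int[OF simple] by blast
  define t where "t = - k * d"
  have "q dvd k * ((2 * z - A) * d - 1)" using d by (simp add: cong_iff_dvd_diff)
  moreover have "k + t * (2 * z - A) = - (k * ((2 * z - A) * d - 1))" by (simp add: t_def algebra_simps)
  ultimately have "q dvd k + t * (2 * z - A)" by simp
  hence "q ^ Suc n dvd q ^ n * (k + t * (2 * z - A))" by (simp add: mult_dvd_mono)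
  moreover have "q ^ Suc n dvd (q ^ n * t)\<^sup>2"
  proof -
    have "q ^ Suc n dvd q ^ (2 * n)" using n by (intro le_imp_power_dvd) linarith
    hence "q ^ Suc n dvd q ^ (2 * n) * t\<^sup>2" by (rule dvd_mult2)
    thus ?thesis by (simp add: power_mult_distrib power_even_eq)
  qed
  ultimately have "q ^ Suc n dvd q ^ n * (k + t * (2 * z - A)) + (q ^ n * t)\<^sup>2" by (rule dvd_add)
  also have "q ^ n * (k + t * (2 * z - A)) + (q ^ n * t)\<^sup>2
      = (z\<^sup>2 - A * z - C) + q ^ n * t * (2 * z - A) + (q ^ n * t)\<^sup>2"
    unfolding k by (simp add: algebra_simps)
  also have "\<dots> = (z + q ^ n * t)\<^sup>2 - A * (z + q ^ n * t) - C"
    by (simp add: power2_eq_square algebra_simps)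
  finally show ?thesis by blast
qed

lemma quadratic_root_unique:
  fixes q z z' A C :: int
  assumes "q ^ n dvd z\<^sup>2 - A * z - C" "q ^ n dvd z'\<^sup>2 - A * z' - C" "coprime (z + z' - A) q"
  shows "[z = z'] (mod q ^ n)"
proof -
  have "(z\<^sup>2 - A * z - C) - (z'\<^sup>2 - A * z' - C) = (z - z') * (z + z' - A)"
    by (simp add: power2_eq_square algebra_simps)
  hence "q ^ n dvd (z - z') * (z + z' - A)" using dvd_diff[OF assms(1,2)] by simp
  moreover have "coprime (q ^ n) (z + z' - A)" using assms(3) by (simp add: ac_simps)
  ultimately show ?thesis by (simp add: cong_iff_dvd_diff coprime_dvd_mult_left_iff)
qed

context padic
begin

lemma zp_quadratic_cong:
  assumes "a \<in> zp p" "c \<in> zp p" "n \<le> m"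
  shows "[z\<^sup>2 - a m * z - c m = z\<^sup>2 - a n * z - c n] (mod int p ^ n)"
  using zp_cong[OF assms(1,3)] zp_cong[OF assms(2,3)] by (intro cong_diff cong_mult cong_refl)

lemma zp_quadratic_simple:
  assumes a: "a \<in> zp p" and simple: "\<not> int p dvd 2 * r - a 1"
    and "[z = r] (mod int p)" "[z' = r] (mod int p)" "1 \<le> n"
  shows "coprime (z + z' - a n) (int p)"
proof -
  have "[z + z' = r + r] (mod int p)" using assms(3,4) by (rule cong_add)
  moreover have "[a n = a 1] (mod int p)" using zp_cong[OF a assms(5)] by simp
  ultimately have "[z + z' - a n = (r + r) - a 1] (mod int p)" by (rule cong_diff)
  hence "\<not> int p dvd z + z' - a n" using simple cong_dvd_iff by (simp only: mult_2) blast
  thus ?thesis using prime_int_p prime_imp_coprime coprime_commute by blast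
qed

lemma zp_quadratic_approx_root:
  assumes a: "a \<in> zp p" and c: "c \<in> zp p"
    and root: "int p dvd r\<^sup>2 - a 1 * r - c 1" and simple: "\<not> int p dvd 2 * r - a 1"
    and n: "1 \<le> n"
  shows "\<exists>z. int p ^ n dvd z\<^sup>2 - a n * z - c n \<and> [z = r] (mod int p)"
  using n
proof (induction n rule: nat_induct_at_least)
  case base
  show ?case using root by auto
next
  case (Suc n)
  then obtain z where z: "int p ^ n dvd z\<^sup>2 - a n * z - c n" "[z = r] (mod int p)" by blast
  have "int p ^ n dvd z\<^sup>2 - a (Suc n) * z - c (Suc n)"
    using cong_dvd_iff[OF zp_quadratic_cong[OF a c, of n "Suc n" z]] z(1) by simp
  moreover have "coprime (2 * z - a (Suc n)) (int p)"
    using zp_quadratic_simple[OF a simple z(2) z(2), of "Suc n"] by (simp only: mult_2)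
  ultimately obtain t where
    t: "int p ^ Suc n dvd (z + int p ^ n * t)\<^sup>2 - a (Suc n) * (z + int p ^ n * t) - c (Suc n)"
    using quadratic_lift_step Suc(1) by blast
  have "[z + int p ^ n * t = z] (mod int p)"
    using Suc(1) by (simp add: cong_iff_dvd_diff dvd_power dvd_mult2)
  thus ?case using t z(2) cong_trans by blast
qed

lemma zp_quadratic_root:
  assumes a: "a \<in> zp p" and c: "c \<in> zp p"
    and root: "int p dvd r\<^sup>2 - a 1 * r - c 1" and simple: "\<not> int p dvd 2 * r - a 1"
  obtains \<mu> where "\<mu> \<in> zp p" "\<And>n. int p ^ n dvd (\<mu> n)\<^sup>2 - a n * \<mu> n - c n"
proof -
  define S where "S n z \<longleftrightarrow> int p ^ n dvd z\<^sup>2 - a n * z - c n \<and> [z = r] (mod int p)" for n z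
  define g where "g n = (SOME z. S n z)" for n
  have g: "S n (g n)" if "1 \<le> n" for n
    using someI_ex[OF zp_quadratic_approx_root[OF a c root simple that]] by (simp add: g_def S_def)
  have "[g n = g (Suc n)] (mod int p ^ n)" for n
  proof (cases "n = 0")
    case False
    have "int p ^ n dvd int p ^ Suc n" by (simp add: le_imp_power_dvd)
    from dvd_trans[OF this] have "int p ^ n dvd (g (Suc n))\<^sup>2 - a (Suc n) * g (Suc n) - c (Suc n)"
      using g[of "Suc n"] unfolding S_def by simp
    hence "int p ^ n dvd (g (Suc n))\<^sup>2 - a n * g (Suc n) - c n"
      using cong_dvd_iff[OF zp_quadratic_cong[OF a c, of n "Suc n" "g (Suc n)"]] by simp
    moreover have "coprime (g n + g (Suc n) - a n) (int p)"
      using zp_quadratic_simple[OF a simple] g[of n] g[of "Suc n"] False unfolding S_def by simp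
    ultimately show ?thesis
      using quadratic_root_unique[of "int p" n "g n" "a n" "c n" "g (Suc n)"] g[of n] False
      unfolding S_def by simp
  qed simp
  hence "(\<lambda>n. g n mod int p ^ n) \<in> zp p" by (intro zp_intro p_pos)
  moreover have "int p ^ n dvd (g n mod int p ^ n)\<^sup>2 - a n * (g n mod int p ^ n) - c n" for n
  proof (cases "n = 0")
    case False
    have "[(g n mod int p ^ n)\<^sup>2 - a n * (g n mod int p ^ n) - c n = (g n)\<^sup>2 - a n * g n - c n]
        (mod int p ^ n)"
      by (intro cong_diff cong_mult cong_pow cong_refl) (simp_all add: cong_def)
    moreover have "int p ^ n dvd (g n)\<^sup>2 - a n * g n - c n" using g False unfolding S_def by simp
    ultimately show ?thesis using cong_dvd_iff by blast
  qed simp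
  ultimately show thesis by (rule that)
qed

lemma Zp_quadratic_root:
  assumes "A \<in> Zp" "C \<in> Zp"
    and "int p dvd r\<^sup>2 - residue A p 1 * r - residue C p 1" "\<not> int p dvd 2 * r - residue A p 1"
  obtains Mu where "Mu \<in> Zp" "Mu * Mu = A * Mu + C"
proof -
  obtain \<mu> where \<mu>: "\<mu> \<in> zp p" "\<And>n. int p ^ n dvd (\<mu> n)\<^sup>2 - residue A p n * \<mu> n - residue C p n"
    using zp_quadratic_root[OF residue_in_zp residue_in_zp] assms by metis
  have "zp_mul p \<mu> \<mu> = zp_add p (zp_mul p (residue A p) \<mu>) (residue C p)"
    using \<mu>(2) by (simp add: fun_eq_iff zp_mul_def zp_add_def mod_eq_dvd_iff power2_eq_square
        algebra_simps mod_simps)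
  hence "of_zp p \<mu> * of_zp p \<mu> = of_zp p (residue A p) * of_zp p \<mu> + of_zp p (residue C p)"
    by (metis of_zp_add of_zp_mul)
  hence "of_zp p \<mu> * of_zp p \<mu> = A * of_zp p \<mu> + C" by (simp add: of_zp_residue assms(1,2))
  thus thesis using that of_zp_in_Zp[OF \<mu>(1)] by blast
qed

end

section \<open>Stable submodules of the abelian ideal\<close>

(* S X1 X2 stands for the element X1 x1 + X2 x2 of the abelian ideal spanned by x1 and x2.
   The action of ad x0 on that ideal is, up to the factor p^s, the matrix B = [[A, 1], [C, 0]],
   and the virtual endomorphism sends p (V1 x1 + V2 x2) to the vector P V with P = [[P11, P12],
   [P21, P22]].  A predicate with these closure properties describes a nonzero invariant ideal. *)
locale stable_pairs = padic +
  fixes A C P11 P12 P21 P22 :: resfam and S :: "resfam \<Rightarrow> resfam \<Rightarrow> bool"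
  assumes S_pdvd: "\<And>X1 X2. X1 \<in> Zp \<Longrightarrow> X2 \<in> Zp \<Longrightarrow> S X1 X2 \<Longrightarrow> pdvd 1 X1 \<and> pdvd 1 X2"
    and S_zero: "S 0 0"
    and S_add: "\<And>X1 X2 Y1 Y2. X1 \<in> Zp \<Longrightarrow> X2 \<in> Zp \<Longrightarrow> Y1 \<in> Zp \<Longrightarrow> Y2 \<in> Zp \<Longrightarrow>
      S X1 X2 \<Longrightarrow> S Y1 Y2 \<Longrightarrow> S (X1 + Y1) (X2 + Y2)"
    and S_mult: "\<And>R X1 X2. R \<in> Zp \<Longrightarrow> X1 \<in> Zp \<Longrightarrow> X2 \<in> Zp \<Longrightarrow> S X1 X2 \<Longrightarrow> S (R * X1) (R * X2)"
    and S_ad: "\<And>X1 X2. X1 \<in> Zp \<Longrightarrow> X2 \<in> Zp \<Longrightarrow> S X1 X2 \<Longrightarrow> S (A * X1 + X2) (C * X1)"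
    and S_nontrivial: "\<exists>X1\<in>Zp. \<exists>X2\<in>Zp. S X1 X2 \<and> (X1 \<noteq> 0 \<or> X2 \<noteq> 0)"
    and S_endo: "\<And>V1 V2. V1 \<in> Zp \<Longrightarrow> V2 \<in> Zp \<Longrightarrow> S (of_nat p * V1) (of_nat p * V2) \<Longrightarrow>
      S (P11 * V1 + P12 * V2) (P21 * V1 + P22 * V2)"

context padic
begin

lemma stable_pairs_multiples_of_p:
  assumes "pdvd 1 P11" "pdvd 1 P12" "pdvd 1 P21" "pdvd 1 P22"
  shows "stable_pairs p A C P11 P12 P21 P22 (\<lambda>X1 X2. pdvd 1 X1 \<and> pdvd 1 X2)"
proof unfold_locales
  show "\<exists>X1\<in>Zp. \<exists>X2\<in>Zp. (pdvd 1 X1 \<and> pdvd 1 X2) \<and> (X1 \<noteq> 0 \<or> X2 \<noteq> 0)"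
    using p_one_in_Zp p_one_nonzero pdvd_p_mult[of "one_Zp p"] pdvd_zero Zp_zero by blast
qed (use assms in \<open>auto intro: pdvd_add pdvd_mult_left pdvd_mult_right pdvd_zero\<close>)

lemma stable_pairs_p_p2:
  assumes Zp: "C \<in> Zp" "P22 \<in> Zp"
    and pdvd: "pdvd 1 C" "pdvd 1 P11" "pdvd 2 P21" "pdvd 1 P22"
  shows "stable_pairs p A C P11 P12 P21 P22 (\<lambda>X1 X2. pdvd 1 X1 \<and> pdvd 2 X2)"
proof unfold_locales
  show "\<exists>X1\<in>Zp. \<exists>X2\<in>Zp. (pdvd 1 X1 \<and> pdvd 2 X2) \<and> (X1 \<noteq> 0 \<or> X2 \<noteq> 0)"
    using p_one_in_Zp p_one_nonzero pdvd_p_mult[of "one_Zp p"] pdvd_zero Zp_zero by blast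
next
  fix X1 X2 assume "X1 \<in> Zp" "X2 \<in> Zp" "pdvd 1 X1 \<and> pdvd 2 X2"
  thus "pdvd 1 X1 \<and> pdvd 1 X2" using pdvd_2_1 by blast
next
  fix X1 X2 assume X: "X1 \<in> Zp" "X2 \<in> Zp" "pdvd 1 X1 \<and> pdvd 2 X2"
  have "pdvd 1 (A * X1 + X2)" using X pdvd_2_1 by (blast intro: pdvd_add pdvd_mult_left)
  moreover have "pdvd 2 (C * X1)" using pdvd_1_1_mult[OF Zp(1) X(1) pdvd(1)] X(3) by blast
  ultimately show "pdvd 1 (A * X1 + X2) \<and> pdvd 2 (C * X1)" ..
next
  fix V1 V2 assume V: "V1 \<in> Zp" "V2 \<in> Zp" "pdvd 1 (of_nat p * V1) \<and> pdvd 2 (of_nat p * V2)"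
  have V2: "pdvd 1 V2" using pdvd_2_p_mult_cancel[OF V(2)] V(3) by blast
  have "pdvd 1 (P11 * V1 + P12 * V2)" using pdvd(2) V2 by (blast intro: pdvd_add pdvd_mult_left pdvd_mult_right)
  moreover have "pdvd 2 (P21 * V1 + P22 * V2)"
    using pdvd(3) pdvd_1_1_mult[OF Zp(2) V(2) pdvd(4) V2] by (blast intro: pdvd_add pdvd_mult_right)
  ultimately show "pdvd 1 (P11 * V1 + P12 * V2) \<and> pdvd 2 (P21 * V1 + P22 * V2)" ..
qed (auto intro: pdvd_add pdvd_mult_left pdvd_zero)

lemma quadratic_root_eigenvector:
  fixes A C Mu R w y :: "'a :: comm_ring_1"
  assumes "Mu * Mu = A * Mu + C"
  shows "C * R = R * Mu * (Mu - A)"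
    and "(A * y + w) * R + y * (R * (Mu - A)) = R * (w + y * Mu)"
    and "C * y * R + w * (R * (Mu - A)) = R * (w + y * Mu) * (Mu - A)"
proof -
  have "Mu * (Mu - A) = C" using assms by (simp add: algebra_simps)
  thus "C * R = R * Mu * (Mu - A)" "C * y * R + w * (R * (Mu - A)) = R * (w + y * Mu) * (Mu - A)"
    by (simp_all add: algebra_simps flip: \<open>Mu * (Mu - A) = C\<close>)
  show "(A * y + w) * R + y * (R * (Mu - A)) = R * (w + y * Mu)" by (simp add: algebra_simps)
qed

lemma stable_pairs_eigenline:
  assumes Zp: "A \<in> Zp" "Mu \<in> Zp" "w \<in> Zp" "y \<in> Zp"
    and root: "Mu * Mu = A * Mu + C"
    and eigenvalue: "pdvd 1 (w + y * Mu)"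
  shows "stable_pairs p A C (A * y + w) y (C * y) w
    (\<lambda>X1 X2. \<exists>R\<in>Zp. X1 = of_nat p * R \<and> X2 = of_nat p * (R * (Mu - A)))"
    (is "stable_pairs _ _ _ _ _ _ _ ?S")
proof unfold_locales
  show "?S 0 0" using Zp_zero by force
next
  fix X1 X2 assume "?S X1 X2"
  thus "pdvd 1 X1 \<and> pdvd 1 X2" using pdvd_p_mult by blast
next
  fix X1 X2 Y1 Y2 assume "?S X1 X2" "?S Y1 Y2"
  then obtain R R' where R: "R \<in> Zp" "R' \<in> Zp" "X1 = of_nat p * R" "X2 = of_nat p * (R * (Mu - A))"
    "Y1 = of_nat p * R'" "Y2 = of_nat p * (R' * (Mu - A))" by blast
  have "X1 + Y1 = of_nat p * (R + R')" "X2 + Y2 = of_nat p * ((R + R') * (Mu - A))"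
    unfolding R(3-6) by (simp_all add: algebra_simps)
  moreover have "R + R' \<in> Zp" using R(1,2) by (rule Zp_add)
  ultimately show "?S (X1 + Y1) (X2 + Y2)" by blast
next
  fix R' X1 X2 assume "R' \<in> Zp" "?S X1 X2"
  then obtain R where R: "R \<in> Zp" "X1 = of_nat p * R" "X2 = of_nat p * (R * (Mu - A))" by blast
  have "R' * X1 = of_nat p * (R' * R)" "R' * X2 = of_nat p * ((R' * R) * (Mu - A))"
    unfolding R(2,3) by (simp_all add: algebra_simps)
  moreover have "R' * R \<in> Zp" using \<open>R' \<in> Zp\<close> R(1) by (rule Zp_mult)
  ultimately show "?S (R' * X1) (R' * X2)" by blast
next
  fix X1 X2 assume "?S X1 X2"
  then obtain R where R: "R \<in> Zp" "X1 = of_nat p * R" "X2 = of_nat p * (R * (Mu - A))" by blast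
  have "C * X1 = of_nat p * ((R * Mu) * (Mu - A))"
    using quadratic_root_eigenvector(1)[OF root, of "of_nat p * R"] unfolding R(2) by (simp add: mult.assoc)
  moreover have "A * X1 + X2 = of_nat p * (R * Mu)" unfolding R(2,3) by (simp add: algebra_simps)
  moreover have "R * Mu \<in> Zp" using R(1) Zp(2) by (rule Zp_mult)
  ultimately show "?S (A * X1 + X2) (C * X1)" by blast
next
  have "?S (of_nat p * one_Zp p) (of_nat p * (one_Zp p * (Mu - A)))" using Zp_one by blast
  moreover have "of_nat p * (one_Zp p * (Mu - A)) \<in> Zp" using Zp by (intro Zp_closed)
  ultimately show "\<exists>X1\<in>Zp. \<exists>X2\<in>Zp. ?S X1 X2 \<and> (X1 \<noteq> 0 \<or> X2 \<noteq> 0)"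
    using p_one_in_Zp p_one_nonzero by blast
next
  fix V1 V2 assume V: "V1 \<in> Zp" "V2 \<in> Zp" "?S (of_nat p * V1) (of_nat p * V2)"
  then obtain R where R: "R \<in> Zp" "of_nat p * V1 = of_nat p * R" "of_nat p * V2 = of_nat p * (R * (Mu - A))"
    by blast
  have V1: "V1 = R" using Zp_p_mult_cancel[OF V(1) R(1) R(2)] .
  have "R * (Mu - A) \<in> Zp" using R(1) Zp by (intro Zp_closed)
  hence V2: "V2 = R * (Mu - A)" using Zp_p_mult_cancel[OF V(2) _ R(3)] by blast
  have "w + y * Mu \<in> Zp" using Zp by (intro Zp_closed)
  then obtain k where k: "k \<in> Zp" "w + y * Mu = of_nat p * k"
    using eigenvalue pdvd_1_iff_p_mult by blast
  have "(A * y + w) * V1 + y * V2 = of_nat p * (R * k)"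
    "C * y * V1 + w * V2 = of_nat p * (R * k * (Mu - A))"
    unfolding V1 V2 quadratic_root_eigenvector(2,3)[OF root] k(2) by (simp_all add: algebra_simps)
  moreover have "R * k \<in> Zp" using R(1) k(1) by (rule Zp_mult)
  ultimately show "?S ((A * y + w) * V1 + y * V2) (C * y * V1 + w * V2)" by blast
qed

lemma discriminant_pairs_endo:
  assumes p2: "p \<noteq> 2"
    and Zp: "A \<in> Zp" "C \<in> Zp" "w \<in> Zp" "y \<in> Zp" "V1 \<in> Zp" "V2 \<in> Zp"
    and discriminant: "pdvd 2 (4 * C + A * A)"
    and w: "pdvd 1 (2 * w + A * y)"
    and V: "pdvd 2 (2 * (of_nat p * V2) + A * (of_nat p * V1))"
  defines "Y1 \<equiv> (A * y + w) * V1 + y * V2" and "Y2 \<equiv> C * y * V1 + w * V2"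
  shows "pdvd 1 Y1 \<and> pdvd 2 (2 * Y2 + A * Y1)"
proof -
  define T where "T = 2 * V2 + A * V1"
  have T: "T \<in> Zp" unfolding T_def using Zp by (intro Zp_closed)
  have "pdvd 2 (of_nat p * T)" using V by (simp add: T_def algebra_simps)
  hence "pdvd 1 T" using pdvd_2_p_mult_cancel[OF T] by blast
  have Y: "Y1 \<in> Zp" "2 * Y2 + A * Y1 \<in> Zp" "2 * w + A * y \<in> Zp"
    unfolding Y1_def Y2_def using Zp by (auto intro!: Zp_closed)
  have "2 * Y1 = V1 * (2 * w + A * y) + y * T" by (simp add: Y1_def T_def algebra_simps)
  moreover have "pdvd 1 (V1 * (2 * w + A * y) + y * T)"
    using w \<open>pdvd 1 T\<close> by (blast intro: pdvd_add pdvd_mult_left)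
  ultimately have "pdvd 1 Y1" using pdvd_2_mult_cancel[OF Y(1) p2] by simp
  moreover have "2 * (2 * Y2 + A * Y1) = V1 * y * (4 * C + A * A) + T * (2 * w + A * y)"
    by (simp add: Y1_def Y2_def T_def algebra_simps)
  moreover have "pdvd 2 (V1 * y * (4 * C + A * A) + T * (2 * w + A * y))"
    using discriminant pdvd_1_1_mult[OF T Y(3) \<open>pdvd 1 T\<close> w] by (blast intro: pdvd_add pdvd_mult_left)
  ultimately show ?thesis using pdvd_2_mult_cancel[OF Y(2) p2] by simp
qed

lemma stable_pairs_discriminant:
  assumes p2: "p \<noteq> 2"
    and Zp: "A \<in> Zp" "C \<in> Zp" "w \<in> Zp" "y \<in> Zp"
    and discriminant: "pdvd 2 (4 * C + A * A)"
    and w: "pdvd 1 (2 * w + A * y)"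
  shows "stable_pairs p A C (A * y + w) y (C * y) w (\<lambda>X1 X2. pdvd 1 X1 \<and> pdvd 2 (2 * X2 + A * X1))"
    (is "stable_pairs _ _ _ _ _ _ _ ?S")
proof -
  have X2: "pdvd 1 X2" if "X1 \<in> Zp" "X2 \<in> Zp" "?S X1 X2" for X1 X2
  proof -
    have "2 * X2 + A * X1 \<in> Zp" using that Zp by (intro Zp_closed)
    hence "pdvd 1 (2 * X2 + A * X1)" using that(3) pdvd_2_1 by blast
    hence "pdvd 1 ((2 * X2 + A * X1) - A * X1)" using that by (blast intro: pdvd_diff pdvd_mult_left)
    thus ?thesis using pdvd_2_mult_cancel[OF that(2) p2] by simp
  qed
  show ?thesis
  proof unfold_locales
    fix X1 X2 assume "X1 \<in> Zp" "X2 \<in> Zp" "?S X1 X2"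
    thus "pdvd 1 X1 \<and> pdvd 1 X2" using X2 by blast
  next
    show "?S 0 0" using pdvd_zero by simp
  next
    fix X1 X2 Y1 Y2 assume "?S X1 X2" "?S Y1 Y2"
    moreover have "2 * (X2 + Y2) + A * (X1 + Y1) = (2 * X2 + A * X1) + (2 * Y2 + A * Y1)"
      by (simp add: algebra_simps)
    ultimately show "?S (X1 + Y1) (X2 + Y2)" by (simp only:) (blast intro: pdvd_add)
  next
    fix R X1 X2 assume "?S X1 X2"
    moreover have "2 * (R * X2) + A * (R * X1) = R * (2 * X2 + A * X1)" by (simp add: algebra_simps)
    ultimately show "?S (R * X1) (R * X2)" by (simp only:) (blast intro: pdvd_mult_left)
  next
    fix X1 X2 assume X: "X1 \<in> Zp" "X2 \<in> Zp" "?S X1 X2"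
    have "pdvd 1 (A * X1 + X2)" using X X2 by (blast intro: pdvd_add pdvd_mult_left)
    moreover have "pdvd 2 (2 * (C * X1) + A * (A * X1 + X2))"
    proof -
      have "2 * (2 * (C * X1) + A * (A * X1 + X2)) = (4 * C + A * A) * X1 + A * (2 * X2 + A * X1)"
        by (simp add: algebra_simps)
      moreover have "pdvd 2 ((4 * C + A * A) * X1 + A * (2 * X2 + A * X1))"
        using discriminant X by (blast intro: pdvd_add pdvd_mult_left pdvd_mult_right)
      moreover have "2 * (C * X1) + A * (A * X1 + X2) \<in> Zp" using X Zp by (intro Zp_closed)
      ultimately show ?thesis using pdvd_2_mult_cancel[OF _ p2] by metis
    qed
    ultimately show "?S (A * X1 + X2) (C * X1)" ..
  next
    have "2 * (of_nat p * (of_nat p * one_Zp p)) + A * 0 = of_nat p ^ 2 * (2 * one_Zp p)"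
      by (simp add: algebra_simps power2_eq_square)
    hence "?S 0 (of_nat p * (of_nat p * one_Zp p))" using pdvd_zero pdvd_p_power_mult by metis
    moreover have "of_nat p * (of_nat p * one_Zp p) \<noteq> 0"
      using Zp_p_mult_nonzero[OF p_one_in_Zp p_one_nonzero] .
    moreover have "of_nat p * (of_nat p * one_Zp p) \<in> Zp" by (intro Zp_closed)
    ultimately show "\<exists>X1\<in>Zp. \<exists>X2\<in>Zp. ?S X1 X2 \<and> (X1 \<noteq> 0 \<or> X2 \<noteq> 0)" using Zp_zero by blast
  next
    fix V1 V2 assume "V1 \<in> Zp" "V2 \<in> Zp" "?S (of_nat p * V1) (of_nat p * V2)"
    thus "?S ((A * y + w) * V1 + y * V2) (C * y * V1 + w * V2)"
      using discriminant_pairs_endo[OF p2 Zp _ _ discriminant w] by blast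
  qed
qed

lemma singular_kernel_vector:
  assumes Zp: "P11 \<in> Zp" "P12 \<in> Zp" "P21 \<in> Zp" "P22 \<in> Zp"
    and singular: "P11 * P22 - P12 * P21 = 0"
  obtains V1 V2 where "V1 \<in> Zp" "V2 \<in> Zp" "V1 \<noteq> 0 \<or> V2 \<noteq> 0"
    "P11 * V1 + P12 * V2 = 0" "P21 * V1 + P22 * V2 = 0"
proof (cases "P11 \<noteq> 0 \<or> P12 \<noteq> 0")
  case True
  show thesis
  proof (rule that[of P12 "- P11"])
    show "P12 \<in> Zp" "- P11 \<in> Zp" using Zp by (simp_all add: Zp_uminus)
    show "P12 \<noteq> 0 \<or> - P11 \<noteq> 0" using True by auto
    show "P11 * P12 + P12 * - P11 = 0" "P21 * P12 + P22 * - P11 = 0"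
      using singular by (simp_all add: algebra_simps)
  qed
next
  case False
  show thesis
  proof (cases "P21 \<noteq> 0 \<or> P22 \<noteq> 0")
    case True
    show thesis
    proof (rule that[of P22 "- P21"])
      show "P22 \<in> Zp" "- P21 \<in> Zp" using Zp by (simp_all add: Zp_uminus)
      show "P22 \<noteq> 0 \<or> - P21 \<noteq> 0" using True by auto
      show "P11 * P22 + P12 * - P21 = 0" "P21 * P22 + P22 * - P21 = 0"
        using False by (simp_all add: algebra_simps)
    qed
  next
    case False
    thus thesis using that[of "one_Zp p" 0] \<open>\<not> (P11 \<noteq> 0 \<or> P12 \<noteq> 0)\<close> one_Zp_nonzero Zp_one Zp_zero
      by simp
  qed
qed

lemma kernel_ad_closed:
  assumes Zp: "P11 \<in> Zp" "P12 \<in> Zp" "P21 \<in> Zp" "P22 \<in> Zp" "A \<in> Zp" "C \<in> Zp" "V1 \<in> Zp" "V2 \<in> Zp"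
    and intertwining: "of_nat p * P11 = l * (A * P12 + P22)" "of_nat p * P21 = l * (C * P12)"
      "of_nat p * (A * P11 + C * P12) = l * (A * P11 + P21)"
      "of_nat p * (A * P21 + C * P22) = l * (C * P11)"
    and kernel: "P11 * V1 + P12 * V2 = 0" "P21 * V1 + P22 * V2 = 0"
  shows "P11 * (A * V1 + V2) + P12 * (C * V1) = 0" "P21 * (A * V1 + V2) + P22 * (C * V1) = 0"
proof -
  have W: "P11 * (A * V1 + V2) + P12 * (C * V1) \<in> Zp" "P21 * (A * V1 + V2) + P22 * (C * V1) \<in> Zp"
    using Zp by (auto intro!: Zp_closed)
  have "of_nat p * (P11 * (A * V1 + V2) + P12 * (C * V1))
      = V1 * (of_nat p * (A * P11 + C * P12)) + V2 * (of_nat p * P11)"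
    by (simp add: algebra_simps)
  also have "\<dots> = l * (A * (P11 * V1 + P12 * V2) + (P21 * V1 + P22 * V2))"
    unfolding intertwining by (simp add: algebra_simps)
  finally have "of_nat p * (P11 * (A * V1 + V2) + P12 * (C * V1)) = of_nat p * 0" using kernel by simp
  thus "P11 * (A * V1 + V2) + P12 * (C * V1) = 0" using Zp_p_mult_cancel[OF W(1) Zp_zero] by blast
  have "of_nat p * (P21 * (A * V1 + V2) + P22 * (C * V1))
      = V1 * (of_nat p * (A * P21 + C * P22)) + V2 * (of_nat p * P21)"
    by (simp add: algebra_simps)
  also have "\<dots> = l * (C * (P11 * V1 + P12 * V2))"
    unfolding intertwining by (simp add: algebra_simps)
  finally have "of_nat p * (P21 * (A * V1 + V2) + P22 * (C * V1)) = of_nat p * 0" using kernel by simp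
  thus "P21 * (A * V1 + V2) + P22 * (C * V1) = 0" using Zp_p_mult_cancel[OF W(2) Zp_zero] by blast
qed

lemma stable_pairs_kernel:
  assumes Zp: "P11 \<in> Zp" "P12 \<in> Zp" "P21 \<in> Zp" "P22 \<in> Zp" "A \<in> Zp" "C \<in> Zp"
    and intertwining: "of_nat p * P11 = l * (A * P12 + P22)" "of_nat p * P21 = l * (C * P12)"
      "of_nat p * (A * P11 + C * P12) = l * (A * P11 + P21)"
      "of_nat p * (A * P21 + C * P22) = l * (C * P11)"
    and singular: "P11 * P22 - P12 * P21 = 0"
  shows "stable_pairs p A C P11 P12 P21 P22 (\<lambda>X1 X2. \<exists>V1\<in>Zp. \<exists>V2\<in>Zp.
    X1 = of_nat p * V1 \<and> X2 = of_nat p * V2 \<and> P11 * V1 + P12 * V2 = 0 \<and> P21 * V1 + P22 * V2 = 0)"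
    (is "stable_pairs _ _ _ _ _ _ _ ?S")
proof unfold_locales
  show "?S 0 0" using Zp_zero by force
next
  fix X1 X2 assume "?S X1 X2"
  thus "pdvd 1 X1 \<and> pdvd 1 X2" using pdvd_p_mult by blast
next
  fix X1 X2 Y1 Y2 assume "?S X1 X2" "?S Y1 Y2"
  then obtain V1 V2 W1 W2 where V: "V1 \<in> Zp" "V2 \<in> Zp" "X1 = of_nat p * V1" "X2 = of_nat p * V2"
      "P11 * V1 + P12 * V2 = 0" "P21 * V1 + P22 * V2 = 0"
    and W: "W1 \<in> Zp" "W2 \<in> Zp" "Y1 = of_nat p * W1" "Y2 = of_nat p * W2"
      "P11 * W1 + P12 * W2 = 0" "P21 * W1 + P22 * W2 = 0" by blast
  have "X1 + Y1 = of_nat p * (V1 + W1)" "X2 + Y2 = of_nat p * (V2 + W2)"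
    "P11 * (V1 + W1) + P12 * (V2 + W2) = (P11 * V1 + P12 * V2) + (P11 * W1 + P12 * W2)"
    "P21 * (V1 + W1) + P22 * (V2 + W2) = (P21 * V1 + P22 * V2) + (P21 * W1 + P22 * W2)"
    unfolding V(3,4) W(3,4) by (simp_all add: algebra_simps)
  moreover have "V1 + W1 \<in> Zp" "V2 + W2 \<in> Zp" using V W by (simp_all add: Zp_add)
  ultimately show "?S (X1 + Y1) (X2 + Y2)" using V(5,6) W(5,6) by auto
next
  fix R X1 X2 assume "R \<in> Zp" "?S X1 X2"
  then obtain V1 V2 where V: "V1 \<in> Zp" "V2 \<in> Zp" "X1 = of_nat p * V1" "X2 = of_nat p * V2"
    "P11 * V1 + P12 * V2 = 0" "P21 * V1 + P22 * V2 = 0" by blast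
  have "R * X1 = of_nat p * (R * V1)" "R * X2 = of_nat p * (R * V2)"
    "P11 * (R * V1) + P12 * (R * V2) = R * (P11 * V1 + P12 * V2)"
    "P21 * (R * V1) + P22 * (R * V2) = R * (P21 * V1 + P22 * V2)"
    unfolding V(3,4) by (simp_all add: algebra_simps)
  moreover have "R * V1 \<in> Zp" "R * V2 \<in> Zp" using V \<open>R \<in> Zp\<close> by (simp_all add: Zp_mult)
  ultimately show "?S (R * X1) (R * X2)" using V(5,6) by auto
next
  fix X1 X2 assume "?S X1 X2"
  then obtain V1 V2 where V: "V1 \<in> Zp" "V2 \<in> Zp" "X1 = of_nat p * V1" "X2 = of_nat p * V2"
    and ker: "P11 * V1 + P12 * V2 = 0" "P21 * V1 + P22 * V2 = 0" by blast
  have "A * X1 + X2 = of_nat p * (A * V1 + V2)" "C * X1 = of_nat p * (C * V1)"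
    unfolding V(3,4) by (simp_all add: algebra_simps)
  moreover have "A * V1 + V2 \<in> Zp" "C * V1 \<in> Zp" using V Zp by (auto intro!: Zp_closed)
  ultimately show "?S (A * X1 + X2) (C * X1)"
    using kernel_ad_closed[OF Zp V(1,2) intertwining ker] by blast
next
  obtain V1 V2 where V: "V1 \<in> Zp" "V2 \<in> Zp" "V1 \<noteq> 0 \<or> V2 \<noteq> 0"
    "P11 * V1 + P12 * V2 = 0" "P21 * V1 + P22 * V2 = 0"
    using singular_kernel_vector[OF Zp(1-4) singular] .
  have "of_nat p * V1 \<noteq> 0 \<or> of_nat p * V2 \<noteq> 0" using V Zp_p_mult_nonzero by blast
  moreover have "of_nat p * V1 \<in> Zp" "of_nat p * V2 \<in> Zp" using V by (simp_all add: Zp_of_nat_mult)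
  ultimately show "\<exists>X1\<in>Zp. \<exists>X2\<in>Zp. ?S X1 X2 \<and> (X1 \<noteq> 0 \<or> X2 \<noteq> 0)" using V by blast
next
  fix V1 V2 assume V: "V1 \<in> Zp" "V2 \<in> Zp" "?S (of_nat p * V1) (of_nat p * V2)"
  then obtain W1 W2 where W: "W1 \<in> Zp" "W2 \<in> Zp" "of_nat p * V1 = of_nat p * W1"
    "of_nat p * V2 = of_nat p * W2" "P11 * W1 + P12 * W2 = 0" "P21 * W1 + P22 * W2 = 0" by blast
  have "V1 = W1" "V2 = W2" using Zp_p_mult_cancel V W by blast+
  hence "P11 * V1 + P12 * V2 = 0" "P21 * V1 + P22 * V2 = 0" using W(5,6) by simp_all
  moreover have "?S 0 0" using Zp_zero by force
  ultimately show "?S (P11 * V1 + P12 * V2) (P21 * V1 + P22 * V2)" by simp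
qed

lemma intertwiner_is_plus_minus_p:
  assumes Zp: "P11 \<in> Zp" "P12 \<in> Zp" "P21 \<in> Zp" "P22 \<in> Zp" "A \<in> Zp" "C \<in> Zp" "l \<in> Zp"
    and C: "C \<noteq> 0"
    and intertwining: "of_nat p * P11 = l * (A * P12 + P22)" "of_nat p * P21 = l * (C * P12)"
      "of_nat p * (A * P11 + C * P12) = l * (A * P11 + P21)"
      "of_nat p * (A * P21 + C * P22) = l * (C * P11)"
    and nonsingular: "P11 * P22 - P12 * P21 \<noteq> 0"
  shows "l = of_nat p * one_Zp p \<or> l = - (of_nat p * one_Zp p)"
proof -
  define D where "D = P11 * P22 - P12 * P21"
  have D: "D \<in> Zp" "C * D \<in> Zp" unfolding D_def using Zp by (auto intro!: Zp_closed)
  have "- (of_nat p * of_nat p) * C * D = (of_nat p * (A * P11 + C * P12)) * (of_nat p * P21)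
      - (of_nat p * P11) * (of_nat p * (A * P21 + C * P22))"
    unfolding D_def by (simp add: algebra_simps)
  also have "\<dots> = - (l * l) * C * D"
    unfolding intertwining D_def by (simp add: algebra_simps)
  finally have pl: "(of_nat p * of_nat p - l * l) * (C * D) = 0" by (simp add: algebra_simps)
  have "(of_nat p * one_Zp p) * (of_nat p * one_Zp p) * (C * D)
      = of_nat p * of_nat p * (one_Zp p * (one_Zp p * (C * D)))"
    by (simp only: mult_ac)
  also have "one_Zp p * (one_Zp p * (C * D)) = C * D" using one_Zp_left D(2) by simp
  finally have pp: "(of_nat p * one_Zp p) * (of_nat p * one_Zp p) * (C * D) = of_nat p * of_nat p * (C * D)" .
  have "((of_nat p * one_Zp p - l) * (of_nat p * one_Zp p + l)) * (C * D)
      = (of_nat p * one_Zp p) * (of_nat p * one_Zp p) * (C * D) - l * l * (C * D)"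
    by (simp add: algebra_simps)
  also have "\<dots> = (of_nat p * of_nat p - l * l) * (C * D)" unfolding pp by (simp add: algebra_simps)
  finally have "((of_nat p * one_Zp p - l) * (of_nat p * one_Zp p + l)) * (C * D) = 0" using pl by simp
  moreover have "C * D \<noteq> 0" using Zp_no_zero_divisors[OF Zp(6) D(1)] C nonsingular by (auto simp: D_def)
  moreover have "of_nat p * one_Zp p - l \<in> Zp" "of_nat p * one_Zp p + l \<in> Zp"
    using Zp by (auto intro!: Zp_closed)
  ultimately have "of_nat p * one_Zp p - l = 0 \<or> of_nat p * one_Zp p + l = 0"
    using Zp_no_zero_divisors D(2) Zp_mult by meson
  thus ?thesis by (auto simp: algebra_simps eq_neg_iff_add_eq_0 add.commute)
qed

lemma intertwiner_commutes_or_anticommutes: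
  assumes Zp: "P11 \<in> Zp" "P12 \<in> Zp" "P21 \<in> Zp" "P22 \<in> Zp" "A \<in> Zp" "C \<in> Zp" "l \<in> Zp"
    and C: "C \<noteq> 0"
    and intertwining: "of_nat p * P11 = l * (A * P12 + P22)" "of_nat p * P21 = l * (C * P12)"
      "of_nat p * (A * P11 + C * P12) = l * (A * P11 + P21)"
      "of_nat p * (A * P21 + C * P22) = l * (C * P11)"
    and nonsingular: "P11 * P22 - P12 * P21 \<noteq> 0"
  shows "(P11 = A * P12 + P22 \<and> P21 = C * P12) \<or> (A = 0 \<and> P11 = - P22 \<and> P21 = - (C * P12))"
proof -
  have cancel: "X = \<epsilon> * Y" if "of_nat p * X = (\<epsilon> * (of_nat p * one_Zp p)) * Y"
    "\<epsilon> = 1 \<or> \<epsilon> = -1" "X \<in> Zp" "Y \<in> Zp" for X Y \<epsilon>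
  proof -
    have "\<epsilon> * Y \<in> Zp" using that(2,4) by (auto intro: Zp_uminus)
    moreover have "(\<epsilon> * (of_nat p * one_Zp p)) * Y = of_nat p * (\<epsilon> * (one_Zp p * Y))"
      by (simp only: mult_ac)
    hence "of_nat p * X = of_nat p * (\<epsilon> * Y)" using that(1) one_Zp_left[OF that(4)] by simp
    ultimately show ?thesis using Zp_p_mult_cancel[OF that(3)] by blast
  qed
  obtain \<epsilon> :: resfam where \<epsilon>: "\<epsilon> = 1 \<or> \<epsilon> = -1" "l = \<epsilon> * (of_nat p * one_Zp p)"
    using intertwiner_is_plus_minus_p[OF assms] by force
  have Zp': "A * P12 + P22 \<in> Zp" "C * P12 \<in> Zp" "A * P11 + C * P12 \<in> Zp" "A * P11 + P21 \<in> Zp"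
    "A * P21 + C * P22 \<in> Zp" "C * P11 \<in> Zp" using Zp by (auto intro!: Zp_closed)
  note e = intertwining[unfolded \<epsilon>(2), THEN cancel, OF \<epsilon>(1)]
  have P11: "P11 = \<epsilon> * (A * P12 + P22)" and P21: "P21 = \<epsilon> * (C * P12)"
    using e(1,2) Zp Zp' by blast+
  show ?thesis
  proof (cases "\<epsilon> = 1")
    case True thus ?thesis using P11 P21 by simp
  next
    case False
    hence \<epsilon>1: "\<epsilon> = -1" using \<epsilon>(1) by blast
    have "A * P11 + C * P12 = - (A * P11 + P21)" using e(3) Zp' \<epsilon>1 by simp
    hence "2 * (A * P11) = 0" using P21 \<epsilon>1 by (simp add: algebra_simps)
    hence AP11: "A * P11 = 0" using Zp_two_mult_eq_zero Zp_mult[OF Zp(5,1)] by blast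
    have "A * P21 + C * P22 = - (C * P11)" using e(4) Zp' \<epsilon>1 by simp
    hence "2 * (C * (A * P12)) = 0" using P11 P21 \<epsilon>1 by (simp add: algebra_simps)
    moreover have "C * (A * P12) \<in> Zp" using Zp by (intro Zp_closed)
    ultimately have "C * (A * P12) = 0" using Zp_two_mult_eq_zero by blast
    hence AP12: "A * P12 = 0" using Zp_no_zero_divisors[OF Zp(6) Zp_mult[OF Zp(5,2)]] C by blast
    have "A = 0"
    proof (rule ccontr)
      assume "A \<noteq> 0"
      hence "P11 = 0" "P12 = 0" using AP11 AP12 Zp_no_zero_divisors Zp by blast+
      thus False using nonsingular P21 by simp
    qed
    thus ?thesis using P11 P21 \<epsilon>1 by simp
  qed
qed

lemma pdvd_det_of_kernel_mod_p:
  assumes Zp: "P11 \<in> Zp" "P12 \<in> Zp" "P21 \<in> Zp" "P22 \<in> Zp" "D1 \<in> Zp" "D2 \<in> Zp"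
    and nonzero: "\<not> (pdvd 1 D1 \<and> pdvd 1 D2)"
    and kernel: "pdvd 1 (P11 * D1 + P12 * D2)" "pdvd 1 (P21 * D1 + P22 * D2)"
  shows "pdvd 1 (P11 * P22 - P12 * P21)"
proof -
  have det: "P11 * P22 - P12 * P21 \<in> Zp" using Zp by (auto intro!: Zp_closed)
  have "(P11 * P22 - P12 * P21) * D1 = P22 * (P11 * D1 + P12 * D2) - P12 * (P21 * D1 + P22 * D2)"
    "(P11 * P22 - P12 * P21) * D2 = P11 * (P21 * D1 + P22 * D2) - P21 * (P11 * D1 + P12 * D2)"
    by (simp_all add: algebra_simps)
  hence "pdvd 1 ((P11 * P22 - P12 * P21) * D1)" "pdvd 1 ((P11 * P22 - P12 * P21) * D2)"
    using kernel by (auto intro: pdvd_diff pdvd_mult_left)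
  thus ?thesis using pdvd_1_mult_iff[OF det] Zp(5,6) nonzero by blast
qed

lemma norm_form_zero_mod_p:
  fixes W Y a c :: int
  assumes zero: "int p dvd W * W + a * W * Y - c * Y * Y"
    and no_root: "\<forall>r. \<not> int p dvd r\<^sup>2 - a * r - c"
  shows "int p dvd W \<and> int p dvd Y"
proof (cases "int p dvd Y")
  case True
  hence "int p dvd (W * W + a * W * Y - c * Y * Y) - (a * W - c * Y) * Y" using zero by simp
  hence "int p dvd W * W" by (simp add: algebra_simps)
  thus ?thesis using True prime_int_p prime_dvd_mult_iff by blast
next
  case False
  hence "coprime Y (int p)" using prime_int_p prime_imp_coprime coprime_commute by blast
  then obtain Y' where Y': "[Y * Y' = 1] (mod int p)" using cong_solve_coprime_int by blast
  define u where "u = Y * Y' - 1"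
  have u: "int p dvd u" using Y' unfolding u_def by (simp add: cong_iff_dvd_diff)
  have "(- W * Y')\<^sup>2 - a * (- W * Y') - c
      = Y' * Y' * (W * W + a * W * Y - c * Y * Y) - (a * W * Y' - c * (Y * Y' + 1)) * u"
    unfolding u_def by (simp add: power2_eq_square algebra_simps)
  also have "int p dvd \<dots>" using dvd_mult[OF zero] dvd_mult[OF u] by (rule dvd_diff)
  finally show ?thesis using no_root by blast
qed

lemma pdvd_norm_form_no_root:
  assumes Zp: "A \<in> Zp" "C \<in> Zp" "w \<in> Zp" "y \<in> Zp"
    and zero: "pdvd 1 (w * w + A * w * y - C * y * y)"
    and no_root: "\<forall>r. \<not> int p dvd r\<^sup>2 - residue A p 1 * r - residue C p 1"
  shows "pdvd 1 w \<and> pdvd 1 y"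
proof -
  have "w * w + A * w * y - C * y * y \<in> Zp" using Zp by (intro Zp_closed)
  hence "int p dvd residue (w * w + A * w * y - C * y * y) p 1"
    using zero pdvd_1_iff by blast
  hence "int p dvd residue w p 1 * residue w p 1 + residue A p 1 * residue w p 1 * residue y p 1
      - residue C p 1 * residue y p 1 * residue y p 1"
    by (simp add: residue_simps mod_simps dvd_eq_mod_eq_0)
  thus ?thesis using norm_form_zero_mod_p[OF _ no_root] pdvd_1_iff Zp by blast
qed

lemma stable_pairs_of_root:
  assumes Zp: "A \<in> Zp" "C \<in> Zp" "w \<in> Zp" "y \<in> Zp" "Mu \<in> Zp"
    and root: "Mu * Mu = A * Mu + C"
    and zero: "pdvd 1 (w * w + A * w * y - C * y * y)"
  shows "\<exists>S. stable_pairs p A C (A * y + w) y (C * y) w S"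
proof -
  have root': "(A - Mu) * (A - Mu) = A * (A - Mu) + C" using root by (simp add: algebra_simps)
  have "(w + y * Mu) * (w + y * (A - Mu)) = w * w + A * w * y - y * y * (Mu * Mu - A * Mu)"
    by (simp add: algebra_simps)
  also have "\<dots> = w * w + A * w * y - C * y * y" using root by (simp add: algebra_simps)
  finally have "pdvd 1 ((w + y * Mu) * (w + y * (A - Mu)))" using zero by simp
  moreover have "w + y * Mu \<in> Zp" "w + y * (A - Mu) \<in> Zp" "A - Mu \<in> Zp" using Zp by (auto intro!: Zp_closed)
  ultimately have "pdvd 1 (w + y * Mu) \<or> pdvd 1 (w + y * (A - Mu))" using pdvd_1_mult_iff by blast
  thus ?thesis using stable_pairs_eigenline[OF Zp(1,5,3,4) root] stable_pairs_eigenline[OF Zp(1) _ Zp(3,4) root']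
    \<open>A - Mu \<in> Zp\<close> by blast
qed

lemma stable_pairs_unit_discriminant:
  assumes Zp: "A \<in> Zp" "C \<in> Zp" "w \<in> Zp" "y \<in> Zp"
    and zero: "pdvd 1 (w * w + A * w * y - C * y * y)"
    and discriminant: "\<not> pdvd 1 (4 * C + A * A)"
  shows "\<exists>S. stable_pairs p A C (A * y + w) y (C * y) w S"
proof (cases "\<exists>r. int p dvd r\<^sup>2 - residue A p 1 * r - residue C p 1")
  case True
  then obtain r where r: "int p dvd r\<^sup>2 - residue A p 1 * r - residue C p 1" by blast
  have "4 * C + A * A \<in> Zp" using Zp by (intro Zp_closed)
  hence "\<not> int p dvd 4 * residue C p 1 + residue A p 1 * residue A p 1"
    using discriminant pdvd_1_iff by (simp add: residue_simps residue_numeral mod_simps dvd_eq_mod_eq_0)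
  moreover have "(2 * r - residue A p 1)\<^sup>2 = 4 * (r\<^sup>2 - residue A p 1 * r - residue C p 1)
      + (4 * residue C p 1 + residue A p 1 * residue A p 1)"
    by (simp add: power2_eq_square algebra_simps)
  ultimately have "\<not> int p dvd 2 * r - residue A p 1"
    using r dvd_mult[OF r, of 4] by (metis dvd_add_right_iff dvd_mult power2_eq_square)
  then obtain Mu where "Mu \<in> Zp" "Mu * Mu = A * Mu + C" using Zp_quadratic_root[OF Zp(1,2) r] by blast
  thus ?thesis using stable_pairs_of_root Zp zero by blast
next
  case False
  hence "pdvd 1 w" "pdvd 1 y" using pdvd_norm_form_no_root[OF Zp zero] by blast+
  hence "pdvd 1 (A * y + w)" "pdvd 1 y" "pdvd 1 (C * y)" "pdvd 1 w"
    by (auto intro: pdvd_add pdvd_mult_left)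
  thus ?thesis using stable_pairs_multiples_of_p by blast
qed

lemma stable_pairs_commuting:
  assumes Zp: "A \<in> Zp" "C \<in> Zp" "w \<in> Zp" "y \<in> Zp"
    and zero: "pdvd 1 (w * w + A * w * y - C * y * y)"
    and cases: "\<not> pdvd 1 (4 * C + A * A) \<or> (pdvd 1 A \<and> pdvd 2 C) \<or> (p \<noteq> 2 \<and> pdvd 2 (4 * C + A * A))"
  shows "\<exists>S. stable_pairs p A C (A * y + w) y (C * y) w S"
  using cases
proof (elim disjE conjE)
  assume "\<not> pdvd 1 (4 * C + A * A)"
  thus ?thesis using stable_pairs_unit_discriminant[OF Zp zero] by blast
next
  assume A: "pdvd 1 A" and C: "pdvd 2 C"
  have C1: "pdvd 1 C" using pdvd_2_1[OF Zp(2) C] .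
  have "pdvd 1 ((w * w + A * w * y - C * y * y) - A * w * y + C * y * y)"
    using zero A C1 by (blast intro: pdvd_add pdvd_diff pdvd_mult_left pdvd_mult_right)
  hence "pdvd 1 w" using pdvd_1_mult_iff[OF Zp(3,3)] by simp
  hence "pdvd 1 (A * y + w)" "pdvd 2 (C * y)" using A C by (auto intro: pdvd_add pdvd_mult_right)
  thus ?thesis using stable_pairs_p_p2[OF Zp(2,3) C1] \<open>pdvd 1 w\<close> by blast
next
  assume p: "p \<noteq> 2" and discriminant: "pdvd 2 (4 * C + A * A)"
  have "4 * (w * w + A * w * y - C * y * y) = (2 * w + A * y) * (2 * w + A * y) - (4 * C + A * A) * (y * y)"
    by (simp add: algebra_simps)
  moreover have "4 * C + A * A \<in> Zp" using Zp by (intro Zp_closed)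
  hence "pdvd 1 (4 * (w * w + A * w * y - C * y * y) + (4 * C + A * A) * (y * y))"
    using zero pdvd_2_1 discriminant by (blast intro: pdvd_add pdvd_mult_left pdvd_mult_right)
  ultimately have "pdvd 1 ((2 * w + A * y) * (2 * w + A * y))" by simp
  moreover have "2 * w + A * y \<in> Zp" using Zp by (intro Zp_closed)
  ultimately have "pdvd 1 (2 * w + A * y)" using pdvd_1_mult_iff by blast
  thus ?thesis using stable_pairs_discriminant[OF p Zp discriminant] by blast
qed

lemma stable_pairs_anticommuting:
  assumes Zp: "C \<in> Zp" "w \<in> Zp" "y \<in> Zp"
    and zero: "pdvd 1 (w * w - C * y * y)"
    and cases: "pdvd 2 C \<or> (\<forall>r. \<not> int p dvd r\<^sup>2 - residue C p 1)"
  shows "\<exists>S. stable_pairs p 0 C (- w) y (- (C * y)) w S"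
  using cases
proof
  assume C: "pdvd 2 C"
  have C1: "pdvd 1 C" using pdvd_2_1[OF Zp(1) C] .
  have "pdvd 1 ((w * w - C * y * y) + C * y * y)"
    using zero C1 by (blast intro: pdvd_add pdvd_mult_right)
  hence "pdvd 1 w" using pdvd_1_mult_iff[OF Zp(2,2)] by simp
  hence "pdvd 1 (- w)" "pdvd 2 (- (C * y))" using C by (auto intro: pdvd_uminus pdvd_mult_right)
  thus ?thesis using stable_pairs_p_p2[OF Zp(1,2) C1] \<open>pdvd 1 w\<close> by blast
next
  assume "\<forall>r. \<not> int p dvd r\<^sup>2 - residue C p 1"
  hence "\<forall>r. \<not> int p dvd r\<^sup>2 - residue 0 p 1 * r - residue C p 1" by (simp add: residue_simps)
  hence "pdvd 1 w" "pdvd 1 y" using pdvd_norm_form_no_root[OF Zp_zero Zp] zero by auto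
  hence "pdvd 1 (- w)" "pdvd 1 y" "pdvd 1 (- (C * y))" "pdvd 1 w"
    by (auto intro: pdvd_uminus pdvd_mult_left)
  thus ?thesis using stable_pairs_multiples_of_p by blast
qed

lemma stable_pairs_exist:
  assumes Zp: "P11 \<in> Zp" "P12 \<in> Zp" "P21 \<in> Zp" "P22 \<in> Zp" "A \<in> Zp" "C \<in> Zp" "l \<in> Zp"
    and C: "C \<noteq> 0"
    and intertwining: "of_nat p * P11 = l * (A * P12 + P22)" "of_nat p * P21 = l * (C * P12)"
      "of_nat p * (A * P11 + C * P12) = l * (A * P11 + P21)"
      "of_nat p * (A * P21 + C * P22) = l * (C * P11)"
    and singular_mod_p: "pdvd 1 (P11 * P22 - P12 * P21)"
    and cases: "\<not> pdvd 1 (4 * C + A * A) \<or> (pdvd 1 A \<and> pdvd 2 C) \<or> (p \<noteq> 2 \<and> pdvd 2 (4 * C + A * A))"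
    and cases_A_0: "A = 0 \<Longrightarrow> pdvd 2 C \<or> (\<forall>r. \<not> int p dvd r\<^sup>2 - residue C p 1)"
  shows "\<exists>S. stable_pairs p A C P11 P12 P21 P22 S"
proof (cases "P11 * P22 - P12 * P21 = 0")
  case True
  thus ?thesis using stable_pairs_kernel[OF Zp(1-6) intertwining] by blast
next
  case False
  from intertwiner_commutes_or_anticommutes[OF Zp C intertwining False] show ?thesis
  proof (elim disjE conjE)
    assume P: "P11 = A * P12 + P22" "P21 = C * P12"
    have "pdvd 1 (P22 * P22 + A * P22 * P12 - C * P12 * P12)"
      using singular_mod_p by (simp add: P algebra_simps)
    thus ?thesis using stable_pairs_commuting[OF Zp(5,6,4,2) _ cases] P by simp
  next
    assume A: "A = 0" and P: "P11 = - P22" "P21 = - (C * P12)"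
    have "pdvd 1 (P22 * P22 - C * P12 * P12)"
      using pdvd_uminus[OF singular_mod_p] by (simp add: P algebra_simps)
    thus ?thesis using stable_pairs_anticommuting[OF Zp(6,4,2) _ cases_A_0[OF A]] P A by simp
  qed
qed

end

section \<open>The lattice \<open>L_7(s,a,c)\<close>\<close>

lemma L7_simps:
  "lcarrier (L7 p s a c) = zp p \<times> zp p \<times> zp p"
  "lzero (L7 p s a c) = (zp_zero, zp_zero, zp_zero)"
  "ladd (L7 p s a c) (u0, u1, u2) (v0, v1, v2) = (zp_add p u0 v0, zp_add p u1 v1, zp_add p u2 v2)"
  "lsmul (L7 p s a c) r (u0, u1, u2) = (zp_mul p r u0, zp_mul p r u1, zp_mul p r u2)"
  by (simp_all add: L7_def)

lemma L7_bracket: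
  "lbr (L7 p s a c) (u0, u1, u2) (v0, v1, v2) =
    (zp_zero,
     zp_add p (zp_mul p (zp_mul p (zp_of_int p (int p ^ s)) a) (zp_sub p (zp_mul p u0 v1) (zp_mul p u1 v0)))
       (zp_mul p (zp_of_int p (int p ^ s)) (zp_sub p (zp_mul p u0 v2) (zp_mul p u2 v0))),
     zp_mul p (zp_mul p (zp_of_int p (int p ^ s)) c) (zp_sub p (zp_mul p u0 v1) (zp_mul p u1 v0)))"
  by (simp add: L7_def Let_def)

locale L7_index_p_endo = padic +
  fixes s :: nat and a c :: "nat \<Rightarrow> int"
    and M :: "((nat \<Rightarrow> int) \<times> (nat \<Rightarrow> int) \<times> (nat \<Rightarrow> int)) set"
    and phi :: "(nat \<Rightarrow> int) \<times> (nat \<Rightarrow> int) \<times> (nat \<Rightarrow> int) \<Rightarrow> (nat \<Rightarrow> int) \<times> (nat \<Rightarrow> int) \<times> (nat \<Rightarrow> int)"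
  assumes a: "a \<in> zp p" and c: "c \<in> zp p" and c_nonzero: "c \<noteq> zp_zero"
    and simple: "simple_virtual_endo p (L7 p s a c) M phi"
    and index: "lie_index (L7 p s a c) M = p"
begin

abbreviation "L \<equiv> L7 p s a c"
abbreviation "A \<equiv> of_zp p a"
abbreviation "C \<equiv> of_zp p c"

definition coord :: "nat \<Rightarrow> (nat \<Rightarrow> int) \<times> (nat \<Rightarrow> int) \<times> (nat \<Rightarrow> int) \<Rightarrow> resfam" where
  "coord t x = of_zp p (if t = 0 then fst x else if t = 1 then fst (snd x) else snd (snd x))"

lemma coord_add: "coord t (ladd L x y) = coord t x + coord t y"
  by (cases x; cases y) (simp add: coord_def L7_simps of_zp_add)

lemma coord_smult: "coord t (lsmul L r x) = of_zp p r * coord t x"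
  by (cases x) (simp add: coord_def L7_simps of_zp_mul)

lemma coord_zero: "coord t (lzero L) = 0"
  by (simp add: coord_def L7_simps of_zp_zero)

lemma coord_in_Zp: "x \<in> lcarrier L \<Longrightarrow> coord t x \<in> Zp"
  by (cases x) (auto simp: coord_def L7_simps intro: of_zp_in_Zp)

lemma one_Zp_coord: "one_Zp p * coord t x = coord t x"
  by (simp add: coord_def one_Zp_mult)

lemma coord_of_int_smult: "coord t (lsmul L (zp_of_int p k) x) = of_int k * coord t x"
  by (simp add: coord_smult of_zp_of_int mult.assoc one_Zp_coord)

lemma coord_eqI:
  assumes "x \<in> lcarrier L" "y \<in> lcarrier L"
    and "coord 0 x = coord 0 y" "coord 1 x = coord 1 y" "coord 2 x = coord 2 y"
  shows "x = y"
proof -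
  obtain x0 x1 x2 y0 y1 y2 where xy: "x = (x0, x1, x2)" "y = (y0, y1, y2)" by (cases x; cases y) auto
  have "of_zp p x0 = of_zp p y0" "of_zp p x1 = of_zp p y1" "of_zp p x2 = of_zp p y2"
    using assms(3-5) by (simp_all add: coord_def xy)
  thus ?thesis using assms(1,2) of_zp_inject by (auto simp: xy L7_simps)
qed

lemma coord_bracket:
  "coord 0 (lbr L x y) = 0"
  "coord 1 (lbr L x y) = of_nat (p ^ s) *
     (A * (coord 0 x * coord 1 y - coord 1 x * coord 0 y) + (coord 0 x * coord 2 y - coord 2 x * coord 0 y))"
  "coord 2 (lbr L x y) = of_nat (p ^ s) * (C * (coord 0 x * coord 1 y - coord 1 x * coord 0 y))"
proof -
  obtain x0 x1 x2 y0 y1 y2 where xy: "x = (x0, x1, x2)" "y = (y0, y1, y2)" by (cases x; cases y) auto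
  have one: "one_Zp p * (of_zp p u * Y) = of_zp p u * Y" for u Y
    by (simp add: mult.assoc[symmetric] one_Zp_mult)
  show "coord 0 (lbr L x y) = 0" by (simp add: xy coord_def L7_bracket of_zp_zero)
  show "coord 1 (lbr L x y) = of_nat (p ^ s) *
     (A * (coord 0 x * coord 1 y - coord 1 x * coord 0 y) + (coord 0 x * coord 2 y - coord 2 x * coord 0 y))"
    by (simp add: xy coord_def L7_bracket of_zp_add of_zp_mul of_zp_sub of_zp_of_int algebra_simps one)
  show "coord 2 (lbr L x y) = of_nat (p ^ s) * (C * (coord 0 x * coord 1 y - coord 1 x * coord 0 y))"
    by (simp add: xy coord_def L7_bracket of_zp_mul of_zp_sub of_zp_of_int algebra_simps one)
qed

lemma virtual_endo: "virtual_endo p L M phi"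
  using simple unfolding simple_virtual_endo_def by blast

lemma M_subset: "M \<subseteq> lcarrier L"
  and M_zero: "lzero L \<in> M"
  and M_add: "x \<in> M \<Longrightarrow> y \<in> M \<Longrightarrow> ladd L x y \<in> M"
  and M_smult: "r \<in> zp p \<Longrightarrow> x \<in> M \<Longrightarrow> lsmul L r x \<in> M"
  using virtual_endo unfolding virtual_endo_def lie_subalgebra_def by blast+

lemma phi_in_carrier: "x \<in> M \<Longrightarrow> phi x \<in> lcarrier L"
  and phi_add: "x \<in> M \<Longrightarrow> y \<in> M \<Longrightarrow> phi (ladd L x y) = ladd L (phi x) (phi y)"
  and phi_smult: "r \<in> zp p \<Longrightarrow> x \<in> M \<Longrightarrow> phi (lsmul L r x) = lsmul L r (phi x)"
  and phi_bracket: "x \<in> M \<Longrightarrow> y \<in> M \<Longrightarrow> phi (lbr L x y) = lbr L (phi x) (phi y)"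
  using virtual_endo unfolding virtual_endo_def by blast+

lemma carrier_add: "x \<in> lcarrier L \<Longrightarrow> y \<in> lcarrier L \<Longrightarrow> ladd L x y \<in> lcarrier L"
  by (cases x; cases y) (auto simp: L7_simps zp_add_mem[OF p_pos])

lemma carrier_smult: "r \<in> zp p \<Longrightarrow> x \<in> lcarrier L \<Longrightarrow> lsmul L r x \<in> lcarrier L"
  by (cases x) (auto simp: L7_simps zp_mul_mem[OF p_pos])

lemma carrier_bracket: "x \<in> lcarrier L \<Longrightarrow> y \<in> lcarrier L \<Longrightarrow> lbr L x y \<in> lcarrier L"
  by (cases x; cases y) (auto simp: L7_simps L7_bracket a c p_pos zp_add_mem zp_mul_mem zp_sub_mem
      zp_of_int_mem zp_zero_mem)

lemma cosets_pigeonhole: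
  assumes "finite I" "card I > p" "\<And>i. i \<in> I \<Longrightarrow> f i \<in> lcarrier L"
  obtains i j m where "i \<in> I" "j \<in> I" "i \<noteq> j" "m \<in> M" "f i = ladd L (f j) m"
proof -
  define coset where "coset y = {ladd L y m | m. m \<in> M}" for y
  have "\<not> inj_on (\<lambda>i. coset (f i)) I"
  proof
    assume "inj_on (\<lambda>i. coset (f i)) I"
    hence "card I = card ((\<lambda>i. coset (f i)) ` I)" by (simp add: card_image)
    also have "\<dots> \<le> card (lie_cosets L M)"
      using virtual_endo assms(3) unfolding virtual_endo_def lie_cosets_def coset_def
      by (intro card_mono) blast+
    also have "\<dots> = p" using index unfolding lie_index_def .
    finally show False using assms(2) by simp
  qed
  then obtain i j where ij: "i \<in> I" "j \<in> I" "i \<noteq> j" "coset (f i) = coset (f j)"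
    unfolding inj_on_def by blast
  have "f i = ladd L (f i) (lzero L)"
    using M_subset M_zero assms(3)[OF ij(1)] by (intro coord_eqI) (auto intro: carrier_add simp: coord_add coord_zero)
  hence "f i \<in> coset (f j)" using ij(4) M_zero unfolding coset_def by blast
  thus thesis using that ij(1-3) unfolding coset_def by blast
qed

definition p_zp :: "nat \<Rightarrow> int" where
  "p_zp = zp_of_int p (int p)"

lemma p_zp_in_zp: "p_zp \<in> zp p"
  unfolding p_zp_def by (rule zp_of_int_mem[OF p_pos])

lemma coord_p_smult: "coord t (lsmul L p_zp x) = of_nat p * coord t x"
  unfolding p_zp_def using coord_of_int_smult[of t "int p" x] by simp

lemma M_unit_smult_cancel:
  assumes x: "x \<in> lcarrier L" and dx: "lsmul L (zp_of_int p d) x \<in> M" and d: "\<not> int p dvd d"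
  shows "x \<in> M"
proof -
  have "of_int d * one_Zp p \<in> Zp" by (intro Zp_closed)
  moreover have "\<not> pdvd 1 (of_int d * one_Zp p)" unfolding pdvd_1_of_int_iff by (rule d)
  ultimately obtain U where U: "U \<in> Zp" "of_int d * one_Zp p * U = one_Zp p" using Zp_unit by blast
  have "coord t (lsmul L (residue U p) (lsmul L (zp_of_int p d) x)) = coord t x" for t
  proof -
    have "(of_int d * one_Zp p * U) * coord t x = U * (of_int d * (one_Zp p * coord t x))"
      by (simp only: mult_ac)
    also have "\<dots> = coord t (lsmul L (residue U p) (lsmul L (zp_of_int p d) x))"
      unfolding coord_smult[of t "residue U p"] coord_of_int_smult of_zp_residue[OF U(1)]
      by (simp add: one_Zp_coord)
    finally show ?thesis by (simp add: U(2) one_Zp_coord)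
  qed
  hence "lsmul L (residue U p) (lsmul L (zp_of_int p d) x) = x"
    using carrier_smult[OF residue_in_zp[OF U(1)] carrier_smult[OF zp_of_int_mem[OF p_pos] x]] x
    by (intro coord_eqI) auto
  thus ?thesis using M_smult[OF residue_in_zp[OF U(1)] dx] by simp
qed

lemma p_smult_in_M:
  assumes x: "x \<in> lcarrier L"
  shows "lsmul L p_zp x \<in> M"
proof -
  define f where "f k = lsmul L (zp_of_int p (int k)) x" for k :: nat
  have "finite {0..p}" "card {0..p} > p" by simp_all
  moreover have "f k \<in> lcarrier L" if "k \<in> {0..p}" for k
    unfolding f_def using x by (rule carrier_smult[OF zp_of_int_mem[OF p_pos]])
  ultimately obtain i j m where ij: "i \<in> {0..p}" "j \<in> {0..p}" "i \<noteq> j"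
    and m: "m \<in> M" "f i = ladd L (f j) m"
    by (rule cosets_pigeonhole)
  define d where "d = int i - int j"
  have d: "d \<noteq> 0" "\<bar>d\<bar> \<le> int p" using ij unfolding d_def by auto
  have mc: "m \<in> lcarrier L" using m(1) M_subset by blast
  have "coord t m = of_int d * coord t x" for t
    using arg_cong[OF m(2), of "coord t"] by (simp add: f_def d_def coord_add coord_of_int_smult algebra_simps)
  hence "lsmul L (zp_of_int p d) x = m"
    using carrier_smult[OF zp_of_int_mem[OF p_pos] x] mc by (intro coord_eqI) (simp_all add: coord_of_int_smult)
  hence dx: "lsmul L (zp_of_int p d) x \<in> M" using m(1) by simp
  show ?thesis
  proof (cases "\<bar>d\<bar> < int p")
    case True
    hence "\<not> int p dvd d" using p_dvd_small_int d(1) by blast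
    thus ?thesis using M_unit_smult_cancel[OF x dx] M_smult[OF p_zp_in_zp] by blast
  next
    case False
    hence "sgn d * d = int p" using d abs_sgn[of d] by (simp add: mult.commute)
    hence "coord t (lsmul L (zp_of_int p (sgn d)) (lsmul L (zp_of_int p d) x)) = coord t (lsmul L p_zp x)" for t
      unfolding coord_of_int_smult coord_p_smult mult.assoc[symmetric] of_int_mult[symmetric] by simp
    hence "lsmul L (zp_of_int p (sgn d)) (lsmul L (zp_of_int p d) x) = lsmul L p_zp x"
      using carrier_smult[OF zp_of_int_mem[OF p_pos] carrier_smult[OF zp_of_int_mem[OF p_pos] x]]
        carrier_smult[OF p_zp_in_zp x]
      by (intro coord_eqI) auto
    thus ?thesis using M_smult[OF zp_of_int_mem[OF p_pos, of "sgn d"] dx] by simp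
  qed
qed

definition "px0 = lsmul L p_zp (zp_of_int p 1, zp_zero, zp_zero)"
definition "px1 = lsmul L p_zp (zp_zero, zp_of_int p 1, zp_zero)"
definition "px2 = lsmul L p_zp (zp_zero, zp_zero, zp_of_int p 1)"

lemma px_in_M: "px0 \<in> M" "px1 \<in> M" "px2 \<in> M"
  unfolding px0_def px1_def px2_def
  by (intro p_smult_in_M; simp add: L7_simps zp_of_int_mem zp_zero_mem p_pos)+

lemma coord_px:
  "coord 0 px0 = of_nat p * one_Zp p" "coord 1 px0 = 0" "coord 2 px0 = 0"
  "coord 0 px1 = 0" "coord 1 px1 = of_nat p * one_Zp p" "coord 2 px1 = 0"
  "coord 0 px2 = 0" "coord 1 px2 = 0" "coord 2 px2 = of_nat p * one_Zp p"
  unfolding px0_def px1_def px2_def coord_p_smult by (simp_all add: coord_def of_zp_of_int of_zp_zero)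

definition pvec :: "resfam \<Rightarrow> resfam \<Rightarrow> (nat \<Rightarrow> int) \<times> (nat \<Rightarrow> int) \<times> (nat \<Rightarrow> int)" where
  "pvec V1 V2 = ladd L (lsmul L (residue V1 p) px1) (lsmul L (residue V2 p) px2)"

lemma pvec_in_M: "V1 \<in> Zp \<Longrightarrow> V2 \<in> Zp \<Longrightarrow> pvec V1 V2 \<in> M"
  unfolding pvec_def using px_in_M residue_in_zp by (blast intro: M_add M_smult)

lemma pvec_in_carrier: "V1 \<in> Zp \<Longrightarrow> V2 \<in> Zp \<Longrightarrow> pvec V1 V2 \<in> lcarrier L"
  using pvec_in_M M_subset by blast

lemma coord_pvec:
  assumes "V1 \<in> Zp" "V2 \<in> Zp"
  shows "coord 0 (pvec V1 V2) = 0" "coord 1 (pvec V1 V2) = of_nat p * V1" "coord 2 (pvec V1 V2) = of_nat p * V2"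
proof -
  have p: "X * (of_nat p * one_Zp p) = of_nat p * X" if "X \<in> Zp" for X
    using one_Zp_right[OF that] by (metis mult.assoc mult.commute)
  show "coord 0 (pvec V1 V2) = 0" "coord 1 (pvec V1 V2) = of_nat p * V1" "coord 2 (pvec V1 V2) = of_nat p * V2"
    unfolding pvec_def coord_add coord_smult coord_px of_zp_residue[OF assms(1)] of_zp_residue[OF assms(2)]
    using assms by (simp_all add: p)
qed

abbreviation "l \<equiv> coord 0 (phi px0)"
abbreviation "P11 \<equiv> coord 1 (phi px1)"
abbreviation "P12 \<equiv> coord 1 (phi px2)"
abbreviation "P21 \<equiv> coord 2 (phi px1)"
abbreviation "P22 \<equiv> coord 2 (phi px2)"

lemma phi_px_in_carrier: "phi px0 \<in> lcarrier L" "phi px1 \<in> lcarrier L" "phi px2 \<in> lcarrier L"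
  using px_in_M phi_in_carrier by auto

lemma coord_phi_pvec:
  assumes "V1 \<in> Zp" "V2 \<in> Zp"
  shows "coord t (phi (pvec V1 V2)) = coord t (phi px1) * V1 + coord t (phi px2) * V2"
  using assms px_in_M residue_in_zp
  by (simp add: pvec_def phi_add phi_smult M_smult coord_add coord_smult of_zp_residue mult.commute)

lemma bracket_px0_pvec:
  assumes V: "V1 \<in> Zp" "V2 \<in> Zp"
  shows "lbr L px0 (pvec V1 V2) = pvec (of_nat (p ^ s * p) * (A * V1 + V2)) (of_nat (p ^ s * p) * (C * V1))"
proof -
  have W: "of_nat (p ^ s * p) * (A * V1 + V2) \<in> Zp" "of_nat (p ^ s * p) * (C * V1) \<in> Zp"
    by (intro Zp_of_nat_mult Zp_add Zp_mult of_zp_in_Zp V a c)+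
  have one: "of_nat p * one_Zp p * (of_nat p * X) = of_nat p * (of_nat p * X)" if "X \<in> Zp" for X
    using one_Zp_left[OF Zp_of_nat_mult[OF that]] by (simp only: mult.assoc)
  have m: "coord 0 px0 * coord 1 (pvec V1 V2) = of_nat p * (of_nat p * V1)"
    "coord 0 px0 * coord 2 (pvec V1 V2) = of_nat p * (of_nat p * V2)"
    unfolding coord_px coord_pvec[OF V] using one V by simp_all
  show ?thesis
  proof (rule coord_eqI)
    show "lbr L px0 (pvec V1 V2) \<in> lcarrier L"
      using carrier_bracket px_in_M M_subset pvec_in_carrier V by blast
    show "coord 0 (lbr L px0 (pvec V1 V2)) = coord 0 (pvec (of_nat (p ^ s * p) * (A * V1 + V2)) (of_nat (p ^ s * p) * (C * V1)))"
      unfolding coord_bracket(1) coord_pvec[OF W] ..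
    show "coord 1 (lbr L px0 (pvec V1 V2)) = coord 1 (pvec (of_nat (p ^ s * p) * (A * V1 + V2)) (of_nat (p ^ s * p) * (C * V1)))"
      unfolding coord_bracket(2) m coord_pvec[OF W] by (simp add: coord_px coord_pvec[OF V] algebra_simps)
    show "coord 2 (lbr L px0 (pvec V1 V2)) = coord 2 (pvec (of_nat (p ^ s * p) * (A * V1 + V2)) (of_nat (p ^ s * p) * (C * V1)))"
      unfolding coord_bracket(3) m coord_pvec[OF W] by (simp add: coord_px coord_pvec[OF V] algebra_simps)
  qed (rule pvec_in_carrier[OF W])
qed

lemma phi_pvec_bracket:
  assumes V: "V1 \<in> Zp" "V2 \<in> Zp"
  defines "W1 \<equiv> of_nat (p ^ s * p) * (A * V1 + V2)" and "W2 \<equiv> of_nat (p ^ s * p) * (C * V1)"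
  shows "phi (pvec W1 W2) = lbr L (phi px0) (phi (pvec V1 V2))"
  unfolding W1_def W2_def bracket_px0_pvec[OF V, symmetric] using phi_bracket px_in_M pvec_in_M V by blast

lemma C_nonzero: "C \<noteq> 0"
  using zp_eq_zero_iff[OF c p_pos] c_nonzero by simp

lemma coord_0_phi_relation:
  assumes V: "V1 \<in> Zp" "V2 \<in> Zp"
  shows "coord 0 (phi px1) * (of_nat (p ^ s * p) * (A * V1 + V2))
    + coord 0 (phi px2) * (of_nat (p ^ s * p) * (C * V1)) = 0"
proof -
  have W: "of_nat (p ^ s * p) * (A * V1 + V2) \<in> Zp" "of_nat (p ^ s * p) * (C * V1) \<in> Zp"
    by (intro Zp_of_nat_mult Zp_add Zp_mult of_zp_in_Zp V a c)+
  show ?thesis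
    using coord_phi_pvec[OF W, of 0] phi_pvec_bracket[OF V] coord_bracket(1) by simp
qed

lemma phi_px_coord_0: "coord 0 (phi px1) = 0" "coord 0 (phi px2) = 0"
proof -
  have Zp: "coord 0 (phi px1) \<in> Zp" "coord 0 (phi px2) \<in> Zp" "C \<in> Zp" "A \<in> Zp"
    using coord_in_Zp phi_px_in_carrier c a of_zp_in_Zp by auto
  have "of_nat (p ^ s * p) * (one_Zp p * coord 0 (phi px1)) = 0"
    using coord_0_phi_relation[OF Zp_zero Zp_one]
    by (simp only: mult_zero_right mult_zero_left add_0_left add_0_right mult_ac)
  thus f1: "coord 0 (phi px1) = 0"
    using Zp_of_nat_mult_cancel[OF Zp(1) Zp_zero, of "p ^ s * p"] one_Zp_left[OF Zp(1)] p_pos by simp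
  have "of_nat (p ^ s * p) * ((one_Zp p * C) * coord 0 (phi px2)) = 0"
    using coord_0_phi_relation[OF Zp_one Zp_zero]
    by (simp only: f1 mult_zero_right mult_zero_left add_0_left add_0_right mult_ac)
  hence "of_nat (p ^ s * p) * (C * coord 0 (phi px2)) = 0" by (simp only: one_Zp_left[OF Zp(3)])
  hence "C * coord 0 (phi px2) = 0"
    using Zp_of_nat_mult_cancel[OF Zp_mult[OF Zp(3,2)] Zp_zero, of "p ^ s * p"] p_pos by simp
  thus "coord 0 (phi px2) = 0" using Zp_no_zero_divisors[OF Zp(3,2)] C_nonzero by blast
qed

lemma phi_intertwines_ad:
  assumes V: "V1 \<in> Zp" "V2 \<in> Zp"
  shows "of_nat p * (P11 * (A * V1 + V2) + P12 * (C * V1)) = l * (A * (P11 * V1 + P12 * V2) + (P21 * V1 + P22 * V2))"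
    and "of_nat p * (P21 * (A * V1 + V2) + P22 * (C * V1)) = l * (C * (P11 * V1 + P12 * V2))"
proof -
  have W: "of_nat (p ^ s * p) * (A * V1 + V2) \<in> Zp" "of_nat (p ^ s * p) * (C * V1) \<in> Zp"
    by (intro Zp_of_nat_mult Zp_add Zp_mult of_zp_in_Zp V a c)+
  have Zp: "P11 \<in> Zp" "P12 \<in> Zp" "P21 \<in> Zp" "P22 \<in> Zp" "l \<in> Zp" "A \<in> Zp" "C \<in> Zp"
    using coord_in_Zp phi_px_in_carrier a c of_zp_in_Zp by auto
  have k: "p ^ s \<noteq> 0" using p_pos by simp
  have eq: "coord t (phi (pvec (of_nat (p ^ s * p) * (A * V1 + V2)) (of_nat (p ^ s * p) * (C * V1))))
      = coord t (lbr L (phi px0) (phi (pvec V1 V2)))" for t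
    using phi_pvec_bracket[OF V] by simp
  have "of_nat (p ^ s) * (of_nat p * (P11 * (A * V1 + V2) + P12 * (C * V1)))
      = of_nat (p ^ s) * (l * (A * (P11 * V1 + P12 * V2) + (P21 * V1 + P22 * V2)))"
    using eq[of 1] unfolding coord_phi_pvec[OF W] coord_bracket(2) coord_phi_pvec[OF V] phi_px_coord_0
    by (simp add: algebra_simps)
  moreover have "of_nat p * (P11 * (A * V1 + V2) + P12 * (C * V1)) \<in> Zp"
    "l * (A * (P11 * V1 + P12 * V2) + (P21 * V1 + P22 * V2)) \<in> Zp"
    by (intro Zp_closed Zp V)+
  ultimately show "of_nat p * (P11 * (A * V1 + V2) + P12 * (C * V1))
      = l * (A * (P11 * V1 + P12 * V2) + (P21 * V1 + P22 * V2))"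
    using Zp_of_nat_mult_cancel k by blast
  have "of_nat (p ^ s) * (of_nat p * (P21 * (A * V1 + V2) + P22 * (C * V1)))
      = of_nat (p ^ s) * (l * (C * (P11 * V1 + P12 * V2)))"
    using eq[of 2] unfolding coord_phi_pvec[OF W] coord_bracket(3) coord_phi_pvec[OF V] phi_px_coord_0
    by (simp add: algebra_simps)
  moreover have "of_nat p * (P21 * (A * V1 + V2) + P22 * (C * V1)) \<in> Zp"
    "l * (C * (P11 * V1 + P12 * V2)) \<in> Zp"
    by (intro Zp_closed Zp V)+
  ultimately show "of_nat p * (P21 * (A * V1 + V2) + P22 * (C * V1)) = l * (C * (P11 * V1 + P12 * V2))"
    using Zp_of_nat_mult_cancel k by blast
qed

lemma phi_coords_in_Zp: "P11 \<in> Zp" "P12 \<in> Zp" "P21 \<in> Zp" "P22 \<in> Zp" "l \<in> Zp" "A \<in> Zp" "C \<in> Zp"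
  using coord_in_Zp phi_px_in_carrier a c of_zp_in_Zp by auto

(* The entries of p P B = l B P: phi intertwines ad (p x0) with ad (phi (p x0)). *)
lemma intertwining:
  "of_nat p * P11 = l * (A * P12 + P22)" "of_nat p * P21 = l * (C * P12)"
  "of_nat p * (A * P11 + C * P12) = l * (A * P11 + P21)" "of_nat p * (A * P21 + C * P22) = l * (C * P11)"
proof -
  note one = one_Zp_right[OF phi_coords_in_Zp(1)] one_Zp_right[OF phi_coords_in_Zp(2)]
    one_Zp_right[OF phi_coords_in_Zp(3)] one_Zp_right[OF phi_coords_in_Zp(4)]
    one_Zp_right[OF phi_coords_in_Zp(6)] one_Zp_right[OF phi_coords_in_Zp(7)]
  note zero = mult_zero_right add_0_left add_0_right
  show "of_nat p * P11 = l * (A * P12 + P22)" "of_nat p * P21 = l * (C * P12)"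
    using phi_intertwines_ad[OF Zp_zero Zp_one] by (simp_all only: one zero)
  have "of_nat p * (P11 * A + P12 * C) = l * (A * P11 + P21)"
    "of_nat p * (P21 * A + P22 * C) = l * (C * P11)"
    using phi_intertwines_ad[OF Zp_one Zp_zero] by (simp_all only: one zero)
  thus "of_nat p * (A * P11 + C * P12) = l * (A * P11 + P21)"
    "of_nat p * (A * P21 + C * P22) = l * (C * P11)"
    by (simp_all only: mult.commute)
qed

lemma kernel_mod_p:
  obtains D1 D2 where "D1 \<in> Zp" "D2 \<in> Zp" "\<not> (pdvd 1 D1 \<and> pdvd 1 D2)"
    "pdvd 1 (P11 * D1 + P12 * D2)" "pdvd 1 (P21 * D1 + P22 * D2)"
proof -
  define f where "f ij = (zp_zero, zp_of_int p (int (fst ij)), zp_of_int p (int (snd ij)))" for ij :: "nat \<times> nat"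
  have "finite ({0..<p} \<times> {0..<p})" by simp
  moreover have "card ({0..<p} \<times> {0..<p}) > p" using p_gt_1 by (simp add: card_cartesian_product)
  moreover have "f ij \<in> lcarrier L" if "ij \<in> {0..<p} \<times> {0..<p}" for ij
    unfolding f_def L7_simps using zp_zero_mem zp_of_int_mem p_pos by auto
  ultimately obtain ij ij' m where ij: "ij \<in> {0..<p} \<times> {0..<p}" "ij' \<in> {0..<p} \<times> {0..<p}" "ij \<noteq> ij'"
    and m: "m \<in> M" "f ij = ladd L (f ij') m"
    by (rule cosets_pigeonhole)
  define d1 where "d1 = int (fst ij) - int (fst ij')"
  define d2 where "d2 = int (snd ij) - int (snd ij')"
  have coord_m: "coord t m = coord t (f ij) - coord t (f ij')" for t
    using arg_cong[OF m(2), of "coord t"] by (simp add: coord_add)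
  have mc: "m \<in> lcarrier L" using m(1) M_subset by blast
  have D: "coord 1 m \<in> Zp" "coord 2 m \<in> Zp" using coord_in_Zp[OF mc] by auto
  have m0: "coord 0 m = 0" unfolding coord_m by (simp add: f_def coord_def)
  have m12: "coord 1 m = of_int d1 * one_Zp p" "coord 2 m = of_int d2 * one_Zp p"
    unfolding coord_m d1_def d2_def by (simp_all add: f_def coord_def of_zp_of_int algebra_simps)
  have "\<not> (pdvd 1 (coord 1 m) \<and> pdvd 1 (coord 2 m))"
  proof
    assume "pdvd 1 (coord 1 m) \<and> pdvd 1 (coord 2 m)"
    hence "int p dvd d1" "int p dvd d2" unfolding m12 pdvd_1_of_int_iff by auto
    moreover have "\<bar>d1\<bar> < int p" "\<bar>d2\<bar> < int p" using ij(1,2) unfolding d1_def d2_def by auto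
    ultimately have "d1 = 0" "d2 = 0" using p_dvd_small_int by blast+
    hence "ij = ij'" unfolding d1_def d2_def by (simp add: prod_eq_iff)
    thus False using ij(3) by simp
  qed
  moreover have "lsmul L p_zp m = pvec (coord 1 m) (coord 2 m)"
    using carrier_smult[OF p_zp_in_zp mc] pvec_in_carrier[OF D]
    by (rule coord_eqI) (simp_all only: coord_p_smult coord_pvec[OF D] m0 mult_zero_right)
  hence "coord t (phi (pvec (coord 1 m) (coord 2 m))) = of_nat p * coord t (phi m)" for t
    using phi_smult[OF p_zp_in_zp m(1)] by (simp add: coord_p_smult)
  hence "pdvd 1 (P11 * coord 1 m + P12 * coord 2 m)" "pdvd 1 (P21 * coord 1 m + P22 * coord 2 m)"
    using coord_phi_pvec[OF D] pdvd_p_mult by metis+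
  ultimately show thesis using that D by blast
qed

lemma singular_mod_p: "pdvd 1 (P11 * P22 - P12 * P21)"
  using kernel_mod_p pdvd_det_of_kernel_mod_p phi_coords_in_Zp by metis

definition pair_ideal :: "(resfam \<Rightarrow> resfam \<Rightarrow> bool) \<Rightarrow> ((nat \<Rightarrow> int) \<times> (nat \<Rightarrow> int) \<times> (nat \<Rightarrow> int)) set" where
  "pair_ideal S = {x \<in> lcarrier L. coord 0 x = 0 \<and> S (coord 1 x) (coord 2 x)}"

context
  fixes S assumes stable: "stable_pairs p A C P11 P12 P21 P22 S"
begin

interpretation S: stable_pairs p A C P11 P12 P21 P22 S by (rule stable)

lemma pair_ideal_pvec:
  assumes "x \<in> pair_ideal S"
  obtains V1 V2 where "V1 \<in> Zp" "V2 \<in> Zp" "x = pvec V1 V2" "S (of_nat p * V1) (of_nat p * V2)"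
proof -
  have x: "x \<in> lcarrier L" "coord 0 x = 0" "S (coord 1 x) (coord 2 x)" using assms unfolding pair_ideal_def by auto
  have Zp: "coord 1 x \<in> Zp" "coord 2 x \<in> Zp" using coord_in_Zp x(1) by auto
  obtain V1 V2 where V: "V1 \<in> Zp" "coord 1 x = of_nat p * V1" "V2 \<in> Zp" "coord 2 x = of_nat p * V2"
    using S.S_pdvd[OF Zp x(3)] pdvd_1_iff_p_mult Zp by metis
  have "x = pvec V1 V2"
    using x(1) pvec_in_carrier[OF V(1,3)]
    by (rule coord_eqI) (simp_all only: x(2) V(2,4) coord_pvec[OF V(1,3)])
  thus thesis using that V x(3) by simp
qed

lemma pair_ideal_lie_ideal: "lie_ideal p L (pair_ideal S)"
  unfolding lie_ideal_def
proof (intro conjI ballI)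
  show "pair_ideal S \<subseteq> lcarrier L" unfolding pair_ideal_def by blast
  show "lzero L \<in> pair_ideal S" unfolding pair_ideal_def using M_zero M_subset S.S_zero by (auto simp: coord_zero)
next
  fix x y assume "x \<in> pair_ideal S" "y \<in> pair_ideal S"
  thus "ladd L x y \<in> pair_ideal S" unfolding pair_ideal_def
    by (auto simp: coord_add intro!: carrier_add S.S_add coord_in_Zp)
next
  fix r x assume "r \<in> zp p" "x \<in> pair_ideal S"
  thus "lsmul L r x \<in> pair_ideal S" unfolding pair_ideal_def
    by (auto simp: coord_smult intro!: carrier_smult S.S_mult coord_in_Zp of_zp_in_Zp)
next
  fix x y assume x: "x \<in> lcarrier L" and "y \<in> pair_ideal S"
  hence y: "y \<in> lcarrier L" "coord 0 y = 0" "S (coord 1 y) (coord 2 y)" unfolding pair_ideal_def by auto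
  have Zp: "coord 1 y \<in> Zp" "coord 2 y \<in> Zp" "of_nat (p ^ s) * coord 0 x \<in> Zp"
    using coord_in_Zp[OF y(1)] Zp_of_nat_mult[OF coord_in_Zp[OF x]] by blast+
  have "S (of_nat (p ^ s) * coord 0 x * (A * coord 1 y + coord 2 y)) (of_nat (p ^ s) * coord 0 x * (C * coord 1 y))"
    using S.S_mult[OF Zp(3) _ _ S.S_ad[OF Zp(1,2) y(3)]] Zp phi_coords_in_Zp by (auto intro!: Zp_closed)
  moreover have "coord 1 (lbr L x y) = of_nat (p ^ s) * coord 0 x * (A * coord 1 y + coord 2 y)"
    "coord 2 (lbr L x y) = of_nat (p ^ s) * coord 0 x * (C * coord 1 y)"
    unfolding coord_bracket y(2) by (simp_all add: algebra_simps)
  ultimately show "lbr L x y \<in> pair_ideal S"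
    unfolding pair_ideal_def using carrier_bracket[OF x y(1)] coord_bracket(1) by simp
qed

lemma pair_ideal_phi: "x \<in> pair_ideal S \<Longrightarrow> x \<in> M \<and> phi x \<in> pair_ideal S"
proof (elim pair_ideal_pvec)
  fix V1 V2 assume V: "V1 \<in> Zp" "V2 \<in> Zp" and x: "x = pvec V1 V2" and S: "S (of_nat p * V1) (of_nat p * V2)"
  have "phi x \<in> lcarrier L" using phi_in_carrier pvec_in_M[OF V] x by simp
  moreover have "coord 0 (phi x) = 0" "S (coord 1 (phi x)) (coord 2 (phi x))"
    using S.S_endo[OF V S] by (simp_all add: x coord_phi_pvec[OF V] phi_px_coord_0 mult.commute)
  ultimately show "x \<in> M \<and> phi x \<in> pair_ideal S" using pvec_in_M[OF V] x unfolding pair_ideal_def by simp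
qed

lemma pair_ideal_invariant: "invariant_ideal p L M phi (pair_ideal S)"
proof -
  have "pair_ideal S \<subseteq> dom_pow L M phi n" for n
  proof (induction n)
    case 0
    show ?case unfolding pair_ideal_def by auto
  next
    case (Suc n)
    thus ?case using pair_ideal_phi by auto
  qed
  thus ?thesis unfolding invariant_ideal_def using pair_ideal_lie_ideal pair_ideal_phi by blast
qed

lemma pair_ideal_nonzero: "pair_ideal S \<noteq> {lzero L}"
proof -
  obtain X1 X2 where X: "X1 \<in> Zp" "X2 \<in> Zp" "S X1 X2" "X1 \<noteq> 0 \<or> X2 \<noteq> 0" using S.S_nontrivial by blast
  define x where "x = (zp_zero, residue X1 p, residue X2 p)"
  have x: "coord 0 x = 0" "coord 1 x = X1" "coord 2 x = X2"
    unfolding x_def coord_def using X of_zp_residue by (simp_all add: of_zp_zero)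
  have "x \<in> pair_ideal S" unfolding pair_ideal_def x_def
    using X residue_in_zp zp_zero_mem p_pos x by (auto simp: L7_simps x_def)
  moreover have "x \<noteq> lzero L" using x X(4) coord_zero by metis
  ultimately show ?thesis by blast
qed

end

lemma no_stable_pairs: "\<not> stable_pairs p A C P11 P12 P21 P22 S"
  using pair_ideal_invariant pair_ideal_nonzero simple unfolding simple_virtual_endo_def by blast

lemma index_p_simple_endo_impossible:
  assumes "\<not> pdvd 1 (4 * C + A * A) \<or> (pdvd 1 A \<and> pdvd 2 C) \<or> (p \<noteq> 2 \<and> pdvd 2 (4 * C + A * A))"
    and "A = 0 \<Longrightarrow> pdvd 2 C \<or> (\<forall>r. \<not> int p dvd r\<^sup>2 - residue C p 1)"
  shows False
  using stable_pairs_exist[OF phi_coords_in_Zp(1-4,6,7,5) C_nonzero intertwining singular_mod_p assms]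
    no_stable_pairs by blast

end

section \<open>The hypotheses on \<open>a\<close> and \<open>c\<close>\<close>

context padic
begin

lemma zp_val_ge_iff:
  assumes x: "x \<in> zp p"
  shows "zp_val p x \<ge> enat k \<longleftrightarrow> x k = 0"
proof (cases "x = zp_zero")
  case True
  thus ?thesis by (simp add: zp_val_def zp_zero_def)
next
  case False
  then obtain n where "x n \<noteq> 0" unfolding zp_zero_def by auto
  moreover have "x 0 = 0" using zp_bounds[OF x, of 0] by simp
  ultimately obtain m where n: "x (Suc m) \<noteq> 0" by (cases n) simp_all
  define v where "v = (LEAST n. x (Suc n) \<noteq> 0)"
  have "x k = 0 \<longleftrightarrow> k \<le> v"
  proof
    assume xk: "x k = 0"
    show "k \<le> v"
    proof (rule ccontr)
      assume "\<not> k \<le> v"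
      hence "x (Suc v) = x k mod int p ^ Suc v" by (intro zp_restrict[OF x]) simp
      hence "x (Suc v) = 0" unfolding xk by simp
      moreover have "x (Suc v) \<noteq> 0" unfolding v_def using n by (rule LeastI)
      ultimately show False by contradiction
    qed
  next
    assume kv: "k \<le> v"
    show "x k = 0"
    proof (cases k)
      case 0
      thus ?thesis using zp_bounds[OF x, of 0] by simp
    next
      case (Suc j)
      hence "j < v" using kv by simp
      hence "\<not> x (Suc j) \<noteq> 0" unfolding v_def by (rule not_less_Least)
      thus ?thesis using Suc by simp
    qed
  qed
  moreover have "zp_val p x = enat v" using False unfolding zp_val_def v_def by simp
  ultimately show ?thesis by simp
qed

lemma zp_val_pdvd:
  assumes x: "x \<in> zp p"
  shows "zp_val p x \<ge> 1 \<longleftrightarrow> pdvd 1 (of_zp p x)" "zp_val p x \<ge> 2 \<longleftrightarrow> pdvd 2 (of_zp p x)"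
    and "zp_val p x = 0 \<longleftrightarrow> \<not> pdvd 1 (of_zp p x)"
    and "zp_val p x = 1 \<longleftrightarrow> pdvd 1 (of_zp p x) \<and> \<not> pdvd 2 (of_zp p x)"
proof -
  have zero: "e = 0 \<longleftrightarrow> \<not> e \<ge> 1" for e :: enat
    by (cases e) (auto simp: one_enat_def zero_enat_def)
  have one: "e = 1 \<longleftrightarrow> e \<ge> 1 \<and> \<not> e \<ge> 2" for e :: enat
    by (cases e) (auto simp: one_enat_def numeral_eq_enat)
  show ge: "zp_val p x \<ge> 1 \<longleftrightarrow> pdvd 1 (of_zp p x)" "zp_val p x \<ge> 2 \<longleftrightarrow> pdvd 2 (of_zp p x)"
    using zp_val_ge_iff[OF x, of 1] zp_val_ge_iff[OF x, of 2] pdvd_of_zp[OF x]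
    by (simp_all only: one_enat_def numeral_eq_enat)
  show "zp_val p x = 0 \<longleftrightarrow> \<not> pdvd 1 (of_zp p x)"
    "zp_val p x = 1 \<longleftrightarrow> pdvd 1 (of_zp p x) \<and> \<not> pdvd 2 (of_zp p x)"
    unfolding zero one ge by simp_all
qed

lemma no_root_mod_2:
  assumes "\<forall>r. \<not> int p dvd r\<^sup>2 - c"
  shows "p \<noteq> 2"
proof
  assume "p = 2"
  moreover have "2 dvd c\<^sup>2 - c" by (cases "even c") (auto simp: power2_eq_square algebra_simps)
  ultimately show False using assms by auto
qed

lemma discriminant_cases_pdvd:
  assumes Zp: "A \<in> Zp" "C \<in> Zp"
    and hyp: "(pdvd 1 A \<and> pdvd 2 C) \<or> (\<not> pdvd 1 A \<and> pdvd 1 C) \<or> (3 \<le> p \<and> A \<noteq> 0 \<and> pdvd 1 A \<and> \<not> pdvd 1 C)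
      \<or> (A = 0 \<and> \<not> pdvd 1 C \<and> (\<forall>r. \<not> int p dvd r\<^sup>2 - residue C p 1))
      \<or> (\<not> pdvd 1 A \<and> \<not> pdvd 1 C \<and> (\<not> pdvd 1 (4 * C + A * A) \<or> pdvd 2 (4 * C + A * A)))"
  shows "\<not> pdvd 1 (4 * C + A * A) \<or> (pdvd 1 A \<and> pdvd 2 C) \<or> (p \<noteq> 2 \<and> pdvd 2 (4 * C + A * A))"
    and "A = 0 \<Longrightarrow> pdvd 2 C \<or> (\<forall>r. \<not> int p dvd r\<^sup>2 - residue C p 1)"
proof -
  have A: "pdvd 1 (4 * C + A * A) \<longleftrightarrow> pdvd 1 A" if "pdvd 1 (4 * C)"
    using pdvd_add_left_iff[OF that] pdvd_1_mult_iff[OF Zp(1,1)] by simp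
  have C: "pdvd 1 (4 * C + A * A) \<longleftrightarrow> pdvd 1 (4 * C)" if "pdvd 1 A"
    using pdvd_add_left_iff[OF pdvd_mult_right[OF that, of A], of "4 * C"] by (simp add: add.commute)
  have four_2: "pdvd 1 (4 * C)" if "p = 2"
  proof -
    have "4 * C = of_nat p * (2 * C)" using that by simp
    thus ?thesis using pdvd_p_mult by metis
  qed
  show "\<not> pdvd 1 (4 * C + A * A) \<or> (pdvd 1 A \<and> pdvd 2 C) \<or> (p \<noteq> 2 \<and> pdvd 2 (4 * C + A * A))"
    using hyp
  proof (elim disjE conjE)
    assume "\<not> pdvd 1 A" "pdvd 1 C"
    thus ?thesis using A pdvd_mult_left by blast
  next
    assume "3 \<le> p" "A \<noteq> 0" "pdvd 1 A" "\<not> pdvd 1 C"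
    thus ?thesis using C pdvd_1_four_mult_iff[OF Zp(2)] by auto
  next
    assume "A = 0" "\<not> pdvd 1 C" "\<forall>r. \<not> int p dvd r\<^sup>2 - residue C p 1"
    thus ?thesis using pdvd_1_four_mult_iff[OF Zp(2)] no_root_mod_2 by simp
  next
    assume "\<not> pdvd 1 A" "pdvd 2 (4 * C + A * A)"
    moreover have "4 * C + A * A \<in> Zp" using Zp by (intro Zp_closed)
    ultimately show ?thesis using A four_2 pdvd_2_1 by blast
  qed blast+
  show "pdvd 2 C \<or> (\<forall>r. \<not> int p dvd r\<^sup>2 - residue C p 1)" if "A = 0"
    using hyp that pdvd_zero[of 1] by blast
qed

lemma discriminant_cases:
  assumes a: "a \<in> zp p" and c: "c \<in> zp p"
    and hyp: "(zp_val p a \<ge> 1 \<and> zp_val p c \<ge> 2)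
       \<or> (zp_val p a = 0 \<and> zp_val p c \<ge> 1)
       \<or> (p \<ge> 3 \<and> a \<noteq> zp_zero \<and> zp_val p a \<ge> 1 \<and> zp_val p c = 0)
       \<or> (a = zp_zero \<and> zp_val p c = 0 \<and> \<not> (\<exists>x::int. x ^ 2 mod int p = c 1))
       \<or> (zp_val p a = 0 \<and> zp_val p c = 0
          \<and> zp_val p (zp_add p (zp_mul p (zp_of_int p 4) c) (zp_mul p a a)) \<noteq> 1)"
  defines "A \<equiv> of_zp p a" and "C \<equiv> of_zp p c"
  shows "\<not> pdvd 1 (4 * C + A * A) \<or> (pdvd 1 A \<and> pdvd 2 C) \<or> (p \<noteq> 2 \<and> pdvd 2 (4 * C + A * A))"
    and "A = 0 \<Longrightarrow> pdvd 2 C \<or> (\<forall>r. \<not> int p dvd r\<^sup>2 - residue C p 1)"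
proof -
  define d where "d = zp_add p (zp_mul p (zp_of_int p 4) c) (zp_mul p a a)"
  have Zp: "A \<in> Zp" "C \<in> Zp" unfolding A_def C_def using a c by (simp_all add: of_zp_in_Zp)
  have d: "d \<in> zp p" unfolding d_def using a c by (intro zp_add_mem zp_mul_mem zp_of_int_mem p_pos)
  have "of_zp p d = 4 * (one_Zp p * C) + A * A"
    unfolding d_def A_def C_def of_zp_add of_zp_mul of_zp_of_int by (simp add: mult.assoc)
  hence D: "of_zp p d = 4 * C + A * A" using one_Zp_left[OF Zp(2)] by simp
  have nonsquare: "\<forall>r. \<not> int p dvd r\<^sup>2 - residue C p 1" if "\<not> (\<exists>x::int. x ^ 2 mod int p = c 1)"
  proof (intro allI notI)
    fix r assume "int p dvd r\<^sup>2 - residue C p 1"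
    hence "r\<^sup>2 mod int p = residue C p 1 mod int p" by (simp add: mod_eq_dvd_iff)
    thus False using that zp_mod[OF c, of 1] unfolding C_def using c by simp
  qed
  have "(pdvd 1 A \<and> pdvd 2 C) \<or> (\<not> pdvd 1 A \<and> pdvd 1 C) \<or> (3 \<le> p \<and> A \<noteq> 0 \<and> pdvd 1 A \<and> \<not> pdvd 1 C)
      \<or> (A = 0 \<and> \<not> pdvd 1 C \<and> (\<forall>r. \<not> int p dvd r\<^sup>2 - residue C p 1))
      \<or> (\<not> pdvd 1 A \<and> \<not> pdvd 1 C \<and> (\<not> pdvd 1 (4 * C + A * A) \<or> pdvd 2 (4 * C + A * A)))"
    using hyp nonsquare
    unfolding zp_val_pdvd[OF a, folded A_def] zp_val_pdvd[OF c, folded C_def]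
      zp_val_pdvd[OF d, unfolded D, folded d_def] d_def[symmetric] zp_eq_zero_iff[OF a p_pos, folded A_def]
    by blast
  thus "\<not> pdvd 1 (4 * C + A * A) \<or> (pdvd 1 A \<and> pdvd 2 C) \<or> (p \<noteq> 2 \<and> pdvd 2 (4 * C + A * A))"
    and "A = 0 \<Longrightarrow> pdvd 2 C \<or> (\<forall>r. \<not> int p dvd r\<^sup>2 - residue C p 1)"
    using discriminant_cases_pdvd[OF Zp] by blast+
qed

end

theorem proposition1p20:
  fixes p s :: nat and a c :: "nat \<Rightarrow> int"
  assumes "prime p"
    and "a \<in> zp p" and "c \<in> zp p" and "c \<noteq> zp_zero"
    and "(zp_val p a \<ge> 1 \<and> zp_val p c \<ge> 2)
       \<or> (zp_val p a = 0 \<and> zp_val p c \<ge> 1)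
       \<or> (p \<ge> 3 \<and> a \<noteq> zp_zero \<and> zp_val p a \<ge> 1 \<and> zp_val p c = 0)
       \<or> (a = zp_zero \<and> zp_val p c = 0 \<and> \<not> (\<exists>x::int. x ^ 2 mod int p = c 1))
       \<or> (zp_val p a = 0 \<and> zp_val p c = 0
          \<and> zp_val p (zp_add p (zp_mul p (zp_of_int p 4) c) (zp_mul p a a)) \<noteq> 1)"
  shows "\<not> self_similar_of_index p (L7 p s a c) 1"
proof
  assume "self_similar_of_index p (L7 p s a c) 1"
  then obtain M phi where "simple_virtual_endo p (L7 p s a c) M phi" "lie_index (L7 p s a c) M = p"
    unfolding self_similar_of_index_def by auto
  then interpret L7_index_p_endo p s a c M phi
    using assms(1-4) by unfold_locales
  show False
    using index_p_simple_endo_impossible discriminant_cases[OF assms(2,3,5)] by blast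
qed

end
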